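(* Let $A$ be a finite set and $C$ a natural number. On a probability space let $(x_i)_{i\ge1}$ be random variables taking values in $A$ and, for each prime $p$, let $y_p$ be a random variable in $\mathbb{Z}/p\mathbb{Z}$. Assume: (i) for every $P$, the vector $(y_p)_{p\le P}$ is uniformly distributed in $\prod_{p\le P}\mathbb{Z}/p\mathbb{Z}$; (ii) for all $i,m\in\mathbb{N}$, $(x_1,\dots,x_m)$ and $(x_{i+1},\dots,x_{i+m})$ have the same distribution; (iii) for every $P$, every $b\in\prod_{p\le P}\mathbb{Z}/p\mathbb{Z}$, all $i,m$ and every $S\subset A^m$, $\mathbb{P}((x_1,\dots,x_m)\in S\mid (y_p)_{p\le P}=b)=\mathbb{P}((x_{i+1},\dots,x_{i+m})\in S\mid (y_p)_{p\le P}=b+i)$, where $b+i$ adds $i$ in every coordinate. For each power of two $P$ put $X_P=(x_1,\dots,x_{CP})$ and $Y_P=(y_p)_{P/2<p\le P}$; for each prime $P/2<p\le P$ let $f_{P,p}\colon A^{CP}\times\mathbb{Z}/p\mathbb{Z}\to\mathbb{C}$ be $1$-bounded and set $f_P(X_P,Y_P)=\mathbb{E}_{P/2<p\le P}f_{P,p}(X_P,y_p)$. Let $W_P$ be a random variable with the same distribution as $Y_P$ and independent of $X_P$. Then \[ \liminf_{P\to\infty,\ P\text{ a power of }2}\ \mathbb{E}\big|f_P(X_P,Y_P)-f_P(X_P,W_P)\big|=0 . \]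
   Context: $p$ always denotes a prime, and $\mathbb{E}_{P/2<p\le P}$ is the uniform average over primes in $(P/2,P]$; for $W_P=(w_p)$, $f_P(X_P,W_P)=\mathbb{E}_{P/2<p\le P}f_{P,p}(X_P,w_p)$. *)

theory Defs
  imports "HOL-Probability.Probability" "HOL-Computational_Algebra.Primes"
begin

definition cprob :: "'w measure \<Rightarrow> ('w \<Rightarrow> bool) \<Rightarrow> ('w \<Rightarrow> bool) \<Rightarrow> real" where
  "cprob M E F = measure M {\<omega>\<in>space M. E \<omega> \<and> F \<omega>} / measure M {\<omega>\<in>space M. F \<omega>}"

definition primes_between :: "nat \<Rightarrow> nat set" where
  "primes_between P = {p. prime p \<and> P < 2 * p \<and> p \<le> P}"

definition primes_upto :: "nat \<Rightarrow> nat set" where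
  "primes_upto P = {p. prime p \<and> p \<le> P}"

definition window :: "(nat \<Rightarrow> 'w \<Rightarrow> 'a) \<Rightarrow> nat \<Rightarrow> nat \<Rightarrow> 'w \<Rightarrow> 'a list" where
  "window x i m \<omega> = map (\<lambda>j. x j \<omega>) [i+1..<i+m+1]"

definition fP :: "(nat \<Rightarrow> nat \<Rightarrow> 'a list \<Rightarrow> nat \<Rightarrow> complex) \<Rightarrow> nat \<Rightarrow> 'a list \<Rightarrow> (nat \<Rightarrow> nat) \<Rightarrow> complex" where
  "fP f P X w = (\<Sum>p\<in>primes_between P. f P p X (w p)) / of_nat (card (primes_between P))"

end

theory Submission
  imports Defs
begin

text \<open>The proof is an entropy decrement argument. Let \<open>H\<^sub>j\<close> be the conditional entropy of the
  window \<open>X = (x\<^sub>1, ..., x\<^sub>n)\<close>, \<open>n = C 2\<^sup>j\<^sup>+\<^sup>1\<close>, given the (uniform) residues \<open>y\<^sub>p\<close>,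
  \<open>p \<le> 2\<^sup>j\<close>. Conditional stationarity makes this entropy invariant under shifting the window,
  so it is subadditive in \<open>n\<close> and \<open>H\<^sub>j / 2\<^sup>j\<^sup>+\<^sup>1\<close> decreases. The drops \<open>I\<^sub>j\<close>, the mutual
  information between \<open>X\<close> and the new residues \<open>y\<^sub>p\<close>, \<open>2\<^sup>j < p \<le> 2\<^sup>j\<^sup>+\<^sup>1\<close>, given the old
  ones, therefore have \<open>\<Sum> I\<^sub>j / 2\<^sup>j\<^sup>+\<^sup>1 < \<infinity>\<close>, whereas \<open>\<Sum> N\<^sub>j / 2\<^sup>j\<^sup>+\<^sup>1 = \<infinity>\<close> for the numbers
  \<open>N\<^sub>j\<close> of new primes because \<open>\<Sum> 1/p\<close> diverges. Hence \<open>I\<^sub>j \<le> \<epsilon> N\<^sub>j\<close> with \<open>N\<^sub>j\<close> large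
  for infinitely many \<open>j\<close>. For such \<open>j\<close> and fixed \<open>X\<close>, Hoeffding's inequality shows that
  \<open>f\<^sub>P(X, w)\<close> for uniform independent new residues \<open>w\<close> deviates from its mean with probability
  at most \<open>4 exp(-N\<^sub>j \<epsilon>\<^sup>2/64)\<close>; the Donsker--Varadhan inequality transfers this to the true
  joint law of \<open>X\<close> and the new residues at the cost of \<open>I\<^sub>j + 1\<close>. So \<open>f\<^sub>P(X, Y)\<close> and
  \<open>f\<^sub>P(X, W)\<close> are both close to the same mean in \<open>L\<^sup>1\<close>.\<close>

section \<open>Information inequalities for finite sums\<close>

lemma diff_le_mult_ln_div:
  fixes a b :: real
  assumes "0 < a" "0 < b"
  shows "a - b \<le> a * ln (a / b)"
proof -
  have "a * ln (b / a) \<le> a * (b / a - 1)"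
    using assms by (intro mult_left_mono ln_le_minus_one) auto
  also have "\<dots> = b - a" using assms by (simp add: field_simps)
  finally show ?thesis using assms by (simp add: ln_div algebra_simps)
qed

lemma gibbs_inequality:
  fixes v s :: "'k \<Rightarrow> real"
  assumes "finite K" and "\<And>k. k \<in> K \<Longrightarrow> 0 \<le> v k" and "\<And>k. k \<in> K \<Longrightarrow> 0 \<le> s k"
    and "\<And>k. k \<in> K \<Longrightarrow> 0 < v k \<Longrightarrow> 0 < s k"
  shows "sum v K - sum s K \<le> (\<Sum>k\<in>K. v k * ln (v k / s k))"
proof -
  have "v k - s k \<le> v k * ln (v k / s k)" if k: "k \<in> K" for k
  proof (cases "v k = 0")
    case True thus ?thesis using assms(3)[OF k] by simp
  next
    case False
    hence "0 < v k" using assms(2)[OF k] by simp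
    thus ?thesis using diff_le_mult_ln_div assms(4)[OF k] by blast
  qed
  hence "(\<Sum>k\<in>K. v k - s k) \<le> (\<Sum>k\<in>K. v k * ln (v k / s k))" by (rule sum_mono)
  thus ?thesis by (simp add: sum_subtractf)
qed

lemma entropy_le_marginal_entropies:
  fixes r :: "'u \<Rightarrow> 'v \<Rightarrow> real"
  assumes U: "finite U" and V: "finite V"
    and nn: "\<And>u v. u \<in> U \<Longrightarrow> v \<in> V \<Longrightarrow> 0 \<le> r u v"
    and tot: "(\<Sum>u\<in>U. \<Sum>v\<in>V. r u v) = 1"
  shows "- (\<Sum>u\<in>U. \<Sum>v\<in>V. r u v * ln (r u v))
     \<le> - (\<Sum>u\<in>U. (\<Sum>v\<in>V. r u v) * ln (\<Sum>v\<in>V. r u v))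
        - (\<Sum>v\<in>V. (\<Sum>u\<in>U. r u v) * ln (\<Sum>u\<in>U. r u v))"
proof -
  define r1 where "r1 u = (\<Sum>v\<in>V. r u v)" for u
  define r2 where "r2 v = (\<Sum>u\<in>U. r u v)" for v
  have r1_ge: "r u v \<le> r1 u" and r2_ge: "r u v \<le> r2 v" if "u \<in> U" "v \<in> V" for u v
    unfolding r1_def r2_def using that U V nn
    by (auto intro: member_le_sum[where f = "\<lambda>v. r u v"] member_le_sum[where f = "\<lambda>u. r u v"])
  have r1_nn: "0 \<le> r1 u" if "u \<in> U" for u unfolding r1_def using nn that by (intro sum_nonneg) auto
  have r2_nn: "0 \<le> r2 v" if "v \<in> V" for v unfolding r2_def using nn that by (intro sum_nonneg) auto
  have "(\<Sum>k\<in>U \<times> V. r (fst k) (snd k)) - (\<Sum>k\<in>U \<times> V. r1 (fst k) * r2 (snd k))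
      \<le> (\<Sum>k\<in>U \<times> V. r (fst k) (snd k) * ln (r (fst k) (snd k) / (r1 (fst k) * r2 (snd k))))"
  proof (rule gibbs_inequality)
    fix k assume "k \<in> U \<times> V" "0 < r (fst k) (snd k)"
    thus "0 < r1 (fst k) * r2 (snd k)" using r1_ge r2_ge by (fastforce intro: mult_pos_pos)
  qed (use U V nn r1_nn r2_nn in auto)
  moreover have "(\<Sum>k\<in>U \<times> V. r (fst k) (snd k)) = 1" using tot by (simp add: sum.cartesian_product')
  moreover have "(\<Sum>k\<in>U \<times> V. r1 (fst k) * r2 (snd k)) = 1"
    using tot by (simp add: sum.cartesian_product' sum_product[symmetric] r1_def r2_def sum.swap[of _ U V])
  ultimately have "0 \<le> (\<Sum>u\<in>U. \<Sum>v\<in>V. r u v * ln (r u v / (r1 u * r2 v)))"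
    by (simp add: sum.cartesian_product')
  also have "\<dots> = (\<Sum>u\<in>U. \<Sum>v\<in>V. r u v * ln (r u v) - r u v * ln (r1 u) - r u v * ln (r2 v))"
  proof (intro sum.cong refl)
    fix u v assume uv: "u \<in> U" "v \<in> V"
    show "r u v * ln (r u v / (r1 u * r2 v)) = r u v * ln (r u v) - r u v * ln (r1 u) - r u v * ln (r2 v)"
    proof (cases "r u v = 0")
      case False
      hence "0 < r u v" using nn[OF uv] by simp
      moreover from this have "0 < r1 u" "0 < r2 v" using r1_ge[OF uv] r2_ge[OF uv] by auto
      ultimately show ?thesis by (simp add: ln_div ln_mult algebra_simps)
    qed simp
  qed
  also have "\<dots> = (\<Sum>u\<in>U. \<Sum>v\<in>V. r u v * ln (r u v)) - (\<Sum>u\<in>U. r1 u * ln (r1 u))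
        - (\<Sum>v\<in>V. r2 v * ln (r2 v))"
    by (simp add: sum_subtractf r1_def r2_def sum_distrib_right sum.swap[of _ U V])
  finally show ?thesis by (simp add: r1_def r2_def)
qed

text \<open>Donsker--Varadhan: compare \<open>v\<close> with \<open>p\<close> reweighted by \<open>1/\<rho>\<close> on the event.\<close>
lemma event_mass_le_divergence:
  fixes v p :: "'k \<Rightarrow> real"
  assumes K: "finite K" and v_nn: "\<And>k. k \<in> K \<Longrightarrow> 0 \<le> v k" and p_nn: "\<And>k. k \<in> K \<Longrightarrow> 0 \<le> p k"
    and supp: "\<And>k. k \<in> K \<Longrightarrow> 0 < v k \<Longrightarrow> 0 < p k"
    and sum_v: "sum v K = 1" and sum_p: "sum p K \<le> 1"
    and \<rho>: "0 < \<rho>" and rare: "(\<Sum>k\<in>K. if E k then p k else 0) \<le> \<rho>"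
  shows "(\<Sum>k\<in>K. if E k then v k else 0) * ln (1 / \<rho>) \<le> (\<Sum>k\<in>K. v k * ln (v k / p k)) + 1"
proof -
  define s where "s k = p k * (if E k then 1 / \<rho> else 1)" for k
  have "sum s K = (\<Sum>k\<in>K. if E k then p k else 0) / \<rho> + (\<Sum>k\<in>K. if E k then 0 else p k)"
    by (simp add: s_def sum.distrib[symmetric] sum_divide_distrib if_distrib cong: if_cong)
  also have "\<dots> \<le> 1 + 1"
  proof (rule add_mono)
    show "(\<Sum>k\<in>K. if E k then p k else 0) / \<rho> \<le> 1" using rare \<rho> by simp
    have "(\<Sum>k\<in>K. if E k then 0 else p k) \<le> sum p K" using p_nn by (intro sum_mono) auto
    thus "(\<Sum>k\<in>K. if E k then 0 else p k) \<le> 1" using sum_p by simp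
  qed
  finally have sum_s: "sum s K \<le> 2" by simp
  have "v k * ln (v k / s k) = v k * ln (v k / p k) - (if E k then v k else 0) * ln (1 / \<rho>)"
    if "k \<in> K" for k
  proof (cases "v k = 0")
    case False
    hence "0 < v k" using v_nn[OF that] by simp
    moreover from this have "0 < p k" using supp[OF that] by simp
    ultimately show ?thesis using \<rho> by (simp add: s_def ln_div ln_mult algebra_simps)
  qed simp
  hence "(\<Sum>k\<in>K. v k * ln (v k / s k))
      = (\<Sum>k\<in>K. v k * ln (v k / p k)) - (\<Sum>k\<in>K. if E k then v k else 0) * ln (1 / \<rho>)"
    by (simp add: sum_subtractf sum_distrib_right)
  moreover have "sum v K - sum s K \<le> (\<Sum>k\<in>K. v k * ln (v k / s k))"
    using K v_nn supp p_nn \<rho> by (intro gibbs_inequality) (auto simp: s_def)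
  ultimately show ?thesis using sum_s sum_v by linarith
qed

lemma average_pos:
  fixes g :: "'v \<Rightarrow> real"
  assumes "finite V" "v \<in> V" "\<And>v. 0 \<le> g v" "0 < g v"
  shows "0 < (\<Sum>v\<in>V. g v) / real (card V)"
proof -
  have "g v \<le> (\<Sum>v\<in>V. g v)" using assms by (intro member_le_sum) auto
  moreover have "0 < card V" using assms by (auto simp: card_gt_0_iff)
  ultimately show ?thesis using assms by simp
qed

lemma card_mult_sum_average:
  fixes \<nu> :: "'v \<Rightarrow> 'u \<Rightarrow> real"
  assumes "finite V"
  shows "real (card V) * (\<Sum>u\<in>U. (\<Sum>v\<in>V. \<nu> v u) / real (card V)) = (\<Sum>v\<in>V. \<Sum>u\<in>U. \<nu> v u)"
  using assms by (cases "V = {}") (simp_all add: sum.swap[of _ V U] sum_divide_distrib[symmetric])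

text \<open>In the next two lemmas, \<open>\<nu>\<close> is a probability distribution of a triple \<open>(c, v, u)\<close> and
  the sum is the conditional mutual information of \<open>v\<close> and \<open>u\<close> given \<open>c\<close> when \<open>v\<close> is
  uniform on \<open>V\<close> given \<open>c\<close>.\<close>
lemma conditional_divergence_nonneg:
  fixes \<nu> :: "'c \<Rightarrow> 'v \<Rightarrow> 'u \<Rightarrow> real" and V :: "'v set"
  defines "\<mu> c u \<equiv> (\<Sum>v\<in>V. \<nu> c v u) / real (card V)"
  assumes fin: "finite Cs" "finite V" "finite U" and nn: "\<And>c v u. 0 \<le> \<nu> c v u"
    and tot: "(\<Sum>c\<in>Cs. \<Sum>v\<in>V. \<Sum>u\<in>U. \<nu> c v u) = 1"
  shows "0 \<le> (\<Sum>c\<in>Cs. \<Sum>v\<in>V. \<Sum>u\<in>U. \<nu> c v u * ln (\<nu> c v u / \<mu> c u))"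
proof -
  define \<nu>' where "\<nu>' k = \<nu> (fst k) (fst (snd k)) (snd (snd k))" for k
  define \<mu>' where "\<mu>' k = \<mu> (fst k) (snd (snd k))" for k :: "'c \<times> 'v \<times> 'u"
  have "sum \<nu>' (Cs \<times> V \<times> U) - sum \<mu>' (Cs \<times> V \<times> U) \<le> (\<Sum>k\<in>Cs \<times> V \<times> U. \<nu>' k * ln (\<nu>' k / \<mu>' k))"
  proof (rule gibbs_inequality)
    fix k assume "k \<in> Cs \<times> V \<times> U" "0 < \<nu>' k"
    then obtain c v u where k: "k = (c,v,u)" "v \<in> V" "0 < \<nu> c v u" by (auto simp: \<nu>'_def)
    thus "0 < \<mu>' k"
      using average_pos[of V v "\<lambda>v. \<nu> c v u", OF fin(2) k(2) nn k(3)] by (simp add: \<mu>'_def \<mu>_def)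
  qed (use fin nn in \<open>auto simp: \<nu>'_def \<mu>'_def \<mu>_def intro!: sum_nonneg divide_nonneg_nonneg\<close>)
  thus ?thesis
    using tot fin by (simp add: \<nu>'_def \<mu>'_def sum.cartesian_product' \<mu>_def card_mult_sum_average)
qed

lemma conditional_divergence_event_bound:
  fixes \<nu> :: "'c \<Rightarrow> 'v \<Rightarrow> 'u \<Rightarrow> real" and V :: "'v set"
  defines "\<mu> c u \<equiv> (\<Sum>v\<in>V. \<nu> c v u) / real (card V)"
  assumes fin: "finite Cs" "finite V" "finite U" and nn: "\<And>c v u. 0 \<le> \<nu> c v u"
    and tot: "(\<Sum>c\<in>Cs. \<Sum>v\<in>V. \<Sum>u\<in>U. \<nu> c v u) = 1"
    and rare: "\<And>u. u \<in> U \<Longrightarrow> real (card {v\<in>V. E u v}) \<le> \<rho> * real (card V)" and \<rho>: "0 < \<rho>"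
  shows "(\<Sum>c\<in>Cs. \<Sum>v\<in>V. \<Sum>u\<in>U. if E u v then \<nu> c v u else 0) * ln (1 / \<rho>)
    \<le> (\<Sum>c\<in>Cs. \<Sum>v\<in>V. \<Sum>u\<in>U. \<nu> c v u * ln (\<nu> c v u / \<mu> c u)) + 1"
proof -
  define \<nu>' where "\<nu>' k = \<nu> (fst k) (fst (snd k)) (snd (snd k))" for k
  define \<mu>' where "\<mu>' k = \<mu> (fst k) (snd (snd k))" for k :: "'c \<times> 'v \<times> 'u"
  define E' where "E' k = E (snd (snd k)) (fst (snd k))" for k :: "'c \<times> 'v \<times> 'u"
  have \<mu>_nn: "0 \<le> \<mu> c u" for c u using nn by (auto simp: \<mu>_def intro!: sum_nonneg divide_nonneg_nonneg)
  have sum_\<mu>: "(\<Sum>c\<in>Cs. \<Sum>v\<in>V. \<Sum>u\<in>U. \<mu> c u) = 1"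
    using tot fin by (simp add: \<mu>_def card_mult_sum_average)
  have "(\<Sum>c\<in>Cs. \<Sum>v\<in>V. \<Sum>u\<in>U. if E u v then \<mu> c u else 0)
      = (\<Sum>c\<in>Cs. \<Sum>u\<in>U. \<mu> c u * real (card {v\<in>V. E u v}))"
  proof (intro sum.cong refl)
    fix c
    have "(\<Sum>v\<in>V. if E u v then \<mu> c u else 0) = \<mu> c u * real (card {v\<in>V. E u v})" for u
      using fin by (simp add: sum.If_cases Int_def mult.commute)
    thus "(\<Sum>v\<in>V. \<Sum>u\<in>U. if E u v then \<mu> c u else 0) = (\<Sum>u\<in>U. \<mu> c u * real (card {v\<in>V. E u v}))"
      by (subst sum.swap) simp
  qed
  also have "\<dots> \<le> (\<Sum>c\<in>Cs. \<Sum>u\<in>U. \<mu> c u * (\<rho> * real (card V)))"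
    using rare \<mu>_nn by (intro sum_mono mult_left_mono) auto
  also have "\<dots> = \<rho> * (\<Sum>c\<in>Cs. \<Sum>v\<in>V. \<Sum>u\<in>U. \<mu> c u)"
    by (simp add: sum_distrib_left sum_distrib_right mult_ac sum.swap[of _ V U])
  finally have rare_\<mu>: "(\<Sum>c\<in>Cs. \<Sum>v\<in>V. \<Sum>u\<in>U. if E u v then \<mu> c u else 0) \<le> \<rho>"
    using sum_\<mu> by simp
  have "(\<Sum>k\<in>Cs \<times> V \<times> U. if E' k then \<nu>' k else 0) * ln (1 / \<rho>)
      \<le> (\<Sum>k\<in>Cs \<times> V \<times> U. \<nu>' k * ln (\<nu>' k / \<mu>' k)) + 1"
  proof (rule event_mass_le_divergence)
    fix k assume "k \<in> Cs \<times> V \<times> U" "0 < \<nu>' k"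
    then obtain c v u where k: "k = (c,v,u)" "v \<in> V" "0 < \<nu> c v u" by (auto simp: \<nu>'_def)
    thus "0 < \<mu>' k"
      using average_pos[of V v "\<lambda>v. \<nu> c v u", OF fin(2) k(2) nn k(3)] by (simp add: \<mu>'_def \<mu>_def)
  next
    show "(\<Sum>k\<in>Cs \<times> V \<times> U. if E' k then \<mu>' k else 0) \<le> \<rho>"
      using rare_\<mu> by (simp add: \<mu>'_def E'_def sum.cartesian_product' cong: if_cong)
  qed (use fin nn \<mu>_nn tot sum_\<mu> \<rho> in
        \<open>simp_all add: \<nu>'_def \<mu>'_def sum.cartesian_product' case_prod_beta\<close>)
  thus ?thesis by (simp add: \<nu>'_def \<mu>'_def E'_def sum.cartesian_product' cong: if_cong)
qed

section \<open>Hoeffding's inequality for counting\<close>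

lemma exp_le_quadratic:
  fixes y :: real
  assumes "\<bar>y\<bar> \<le> 1"
  shows "exp y \<le> 1 + y + y\<^sup>2"
proof (cases "0 \<le> y")
  case True thus ?thesis using assms exp_bound by auto
next
  case False
  let ?h = "\<lambda>z::real. 1 + z + z\<^sup>2 - exp z"
  have "?h 0 \<le> ?h y"
  proof (rule DERIV_nonpos_imp_nonincreasing[of y 0 ?h])
    fix z :: real assume z: "y \<le> z" "z \<le> 0"
    have "DERIV ?h z :> 1 + 2 * z - exp z"
      by (auto intro!: derivative_eq_intros simp: power2_eq_square)
    moreover have "1 + 2 * z - exp z \<le> 0"
      using exp_ge_add_one_self[of z] z by linarith
    ultimately show "\<exists>d. DERIV ?h z :> d \<and> d \<le> 0" by blast
  qed (use False in simp)
  thus ?thesis by simp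
qed

lemma sum_exp_centered_le:
  fixes a :: "'r \<Rightarrow> real"
  assumes R: "finite R" and bnd: "\<And>r. r \<in> R \<Longrightarrow> \<bar>a r\<bar> \<le> c" and centered: "sum a R = 0"
    and t: "0 \<le> t" "t * c \<le> 1"
  shows "(\<Sum>r\<in>R. exp (t * a r)) \<le> real (card R) * exp (t\<^sup>2 * c\<^sup>2)"
proof -
  have "exp (t * a r) \<le> 1 + t * a r + t\<^sup>2 * c\<^sup>2" if r: "r \<in> R" for r
  proof -
    have "\<bar>t * a r\<bar> \<le> t * c" using bnd[OF r] t by (simp add: abs_mult mult_left_mono)
    hence "exp (t * a r) \<le> 1 + t * a r + (t * a r)\<^sup>2" using t by (intro exp_le_quadratic) simp
    moreover have "(t * a r)\<^sup>2 \<le> (t * c)\<^sup>2"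
      using \<open>\<bar>t * a r\<bar> \<le> t * c\<close> by (metis abs_le_square_iff abs_of_nonneg abs_ge_zero order_trans)
    ultimately show ?thesis by (simp add: power_mult_distrib)
  qed
  hence "(\<Sum>r\<in>R. exp (t * a r)) \<le> (\<Sum>r\<in>R. 1 + t * a r + t\<^sup>2 * c\<^sup>2)" by (rule sum_mono)
  also have "\<dots> = real (card R) * (1 + t\<^sup>2 * c\<^sup>2)"
    using centered by (simp add: sum.distrib sum_distrib_left[symmetric] algebra_simps)
  also have "\<dots> \<le> real (card R) * exp (t\<^sup>2 * c\<^sup>2)" by (intro mult_left_mono) auto
  finally show ?thesis .
qed

lemma card_PiE_sum_ge_le:
  fixes a :: "'p \<Rightarrow> 'r \<Rightarrow> real"
  assumes S: "finite S" and R: "\<And>p. p \<in> S \<Longrightarrow> finite (R p)"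
    and bnd: "\<And>p r. p \<in> S \<Longrightarrow> r \<in> R p \<Longrightarrow> \<bar>a p r\<bar> \<le> c"
    and centered: "\<And>p. p \<in> S \<Longrightarrow> sum (a p) (R p) = 0"
    and t: "0 \<le> t" "t * c \<le> 1"
  shows "real (card {w \<in> PiE S R. s \<le> (\<Sum>p\<in>S. a p (w p))})
      \<le> real (card (PiE S R)) * exp (real (card S) * t\<^sup>2 * c\<^sup>2 - t * s)"
proof -
  have fin: "finite (PiE S R)" using S R by (intro finite_PiE) auto
  have "real (card {w \<in> PiE S R. s \<le> (\<Sum>p\<in>S. a p (w p))}) * exp (t * s)
      = (\<Sum>w\<in>PiE S R. if s \<le> (\<Sum>p\<in>S. a p (w p)) then exp (t * s) else 0)"
    using fin by (simp add: sum.If_cases Int_def)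
  also have "\<dots> \<le> (\<Sum>w\<in>PiE S R. exp (t * (\<Sum>p\<in>S. a p (w p))))"
    using t by (intro sum_mono) (auto intro: mult_left_mono)
  also have "\<dots> = (\<Sum>w\<in>PiE S R. \<Prod>p\<in>S. exp (t * a p (w p)))"
    by (simp add: sum_distrib_left exp_sum S)
  also have "\<dots> = (\<Prod>p\<in>S. \<Sum>r\<in>R p. exp (t * a p r))"
    using S R by (subst prod_sum_PiE) auto
  also have "\<dots> \<le> (\<Prod>p\<in>S. real (card (R p)) * exp (t\<^sup>2 * c\<^sup>2))"
    using R bnd centered t by (intro prod_mono conjI sum_nonneg sum_exp_centered_le) auto
  also have "\<dots> = real (card (PiE S R)) * exp (real (card S) * t\<^sup>2 * c\<^sup>2)"
    using S R by (simp add: prod.distrib card_PiE exp_of_nat_mult[symmetric] mult.assoc)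
  finally show ?thesis by (simp add: exp_diff field_simps)
qed

lemma card_PiE_sum_ge_le_exp:
  fixes a :: "'p \<Rightarrow> 'r \<Rightarrow> real"
  assumes S: "finite S" and R: "\<And>p. p \<in> S \<Longrightarrow> finite (R p)"
    and bnd: "\<And>p r. p \<in> S \<Longrightarrow> r \<in> R p \<Longrightarrow> \<bar>a p r\<bar> \<le> 2"
    and centered: "\<And>p. p \<in> S \<Longrightarrow> sum (a p) (R p) = 0"
    and e: "0 \<le> e" "e \<le> 1"
  shows "real (card {w \<in> PiE S R. real (card S) * e / 2 \<le> (\<Sum>p\<in>S. a p (w p))})
      \<le> exp (- real (card S) * e\<^sup>2 / 64) * real (card (PiE S R))"
proof -
  have "real (card {w \<in> PiE S R. real (card S) * e / 2 \<le> (\<Sum>p\<in>S. a p (w p))})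
      \<le> real (card (PiE S R)) * exp (real (card S) * (e / 16)\<^sup>2 * 2\<^sup>2 - e / 16 * (real (card S) * e / 2))"
    using S R bnd centered e by (intro card_PiE_sum_ge_le) auto
  also have "real (card S) * (e / 16)\<^sup>2 * 2\<^sup>2 - e / 16 * (real (card S) * e / 2) = - real (card S) * e\<^sup>2 / 64"
    by (simp add: power2_eq_square field_simps)
  finally show ?thesis by (simp add: mult.commute)
qed

text \<open>A large complex sum has a large real or imaginary part of one of the two signs.\<close>
lemma card_PiE_complex_sum_large_le:
  fixes Z :: "'p \<Rightarrow> 'r \<Rightarrow> complex"
  assumes S: "finite S" and R: "\<And>p. p \<in> S \<Longrightarrow> finite (R p)"
    and bnd: "\<And>p r. p \<in> S \<Longrightarrow> r \<in> R p \<Longrightarrow> cmod (Z p r) \<le> 2"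
    and centered: "\<And>p. p \<in> S \<Longrightarrow> (\<Sum>r\<in>R p. Z p r) = 0"
    and e: "0 < e" "e \<le> 1"
  shows "real (card {w \<in> PiE S R. real (card S) * e < cmod (\<Sum>p\<in>S. Z p (w p))})
      \<le> 4 * exp (- real (card S) * e\<^sup>2 / 64) * real (card (PiE S R))"
proof -
  define N where "N = real (card S)"
  define a :: "nat \<Rightarrow> 'p \<Rightarrow> 'r \<Rightarrow> real" where
    "a i p r = (if i = 0 then Re (Z p r) else if i = 1 then - Re (Z p r)
      else if i = 2 then Im (Z p r) else - Im (Z p r))" for i p r
  let ?large = "\<lambda>i. {w \<in> PiE S R. N * e / 2 \<le> (\<Sum>p\<in>S. a i p (w p))}"
  have "{w \<in> PiE S R. N * e < cmod (\<Sum>p\<in>S. Z p (w p))} \<subseteq> (\<Union>i\<in>{0,1,2,3}. ?large i)"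
  proof
    fix w assume w: "w \<in> {w \<in> PiE S R. N * e < cmod (\<Sum>p\<in>S. Z p (w p))}"
    define z where "z = (\<Sum>p\<in>S. Z p (w p))"
    have "N * e < \<bar>Re z\<bar> + \<bar>Im z\<bar>" using w cmod_le[of z] by (simp add: z_def)
    hence "N * e / 2 \<le> \<bar>Re z\<bar> \<or> N * e / 2 \<le> \<bar>Im z\<bar>" by linarith
    moreover have "Re z = (\<Sum>p\<in>S. a 0 p (w p))" "- Re z = (\<Sum>p\<in>S. a 1 p (w p))"
       "Im z = (\<Sum>p\<in>S. a 2 p (w p))" "- Im z = (\<Sum>p\<in>S. a 3 p (w p))"
      by (simp_all add: z_def a_def Re_sum Im_sum sum_negf)
    ultimately have "\<exists>i\<in>{0,1,2,3::nat}. N * e / 2 \<le> (\<Sum>p\<in>S. a i p (w p))"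
      by (cases "0 \<le> Re z"; cases "0 \<le> Im z") auto
    thus "w \<in> (\<Union>i\<in>{0,1,2,3}. ?large i)" using w by blast
  qed
  moreover have "finite (PiE S R)" using S R by (intro finite_PiE) auto
  ultimately have "real (card {w \<in> PiE S R. N * e < cmod (\<Sum>p\<in>S. Z p (w p))})
      \<le> real (card (\<Union>i\<in>{0,1,2,3}. ?large i))"
    by (intro of_nat_mono card_mono) auto
  also have "\<dots> \<le> (\<Sum>i\<in>{0,1,2,3}. real (card (?large i)))"
    using card_UN_le[of "{0,1,2,3::nat}" ?large] by (simp only: of_nat_sum[symmetric] of_nat_le_iff) simp
  also have "\<dots> \<le> (\<Sum>i\<in>{0,1,2,3::nat}. exp (- N * e\<^sup>2 / 64) * real (card (PiE S R)))"
  proof (intro sum_mono)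
    fix i
    have "\<bar>a i p r\<bar> \<le> 2" if "p \<in> S" "r \<in> R p" for p r
      using bnd[OF that] abs_Re_le_cmod[of "Z p r"] abs_Im_le_cmod[of "Z p r"] by (auto simp: a_def)
    moreover have "sum (a i p) (R p) = 0" if "p \<in> S" for p
    proof -
      have "(\<Sum>r\<in>R p. Re (Z p r)) = 0" "(\<Sum>r\<in>R p. Im (Z p r)) = 0"
        using centered[OF that] by (simp_all flip: Re_sum Im_sum)
      thus ?thesis by (cases "i = 0"; cases "i = 1"; cases "i = 2") (simp_all add: a_def sum_negf)
    qed
    ultimately show "real (card (?large i)) \<le> exp (- N * e\<^sup>2 / 64) * real (card (PiE S R))"
      unfolding N_def using S R e by (intro card_PiE_sum_ge_le_exp) auto
  qed
  finally show ?thesis by (simp add: N_def)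
qed

section \<open>Divergence of the dyadic prime densities\<close>

lemma finite_primes_upto [simp]: "finite (primes_upto P)"
  unfolding primes_upto_def by (rule finite_subset[of _ "{..P}"]) auto

lemma finite_primes_between [simp]: "finite (primes_between P)"
  unfolding primes_between_def by (rule finite_subset[of _ "{..P}"]) auto

lemma primes_upto_subset_prime: "primes_upto P \<subseteq> {p. prime p}"
  by (auto simp: primes_upto_def)

lemma primes_between_subset_prime: "primes_between P \<subseteq> {p. prime p}"
  by (auto simp: primes_between_def)

lemma primes_upto_double:
  "primes_upto (2 ^ Suc k) = primes_upto (2 ^ k) \<union> primes_between (2 ^ Suc k)"
  "primes_upto (2 ^ k) \<inter> primes_between (2 ^ Suc k) = {}"
  by (auto simp: primes_upto_def primes_between_def)

lemma prod_primes_upto_multiplicity: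
  assumes "1 \<le> n" "n \<le> x"
  shows "(\<Prod>p\<in>primes_upto x. p ^ multiplicity p n) = n"
proof -
  have "prime_factors n \<subseteq> primes_upto x"
    using assms by (auto simp: primes_upto_def prime_factors_dvd dest: dvd_imp_le)
  hence "(\<Prod>p\<in>primes_upto x. p ^ multiplicity p n) = (\<Prod>p\<in>prime_factors n. p ^ multiplicity p n)"
    using assms by (intro prod.mono_neutral_right) (auto simp: primes_upto_def prime_factors_multiplicity)
  also have "\<dots> = n" using assms by (simp add: prod_prime_factors)
  finally show ?thesis .
qed

lemma harmonic_le_euler_product:
  "(\<Sum>n=1..x. 1 / real n) \<le> (\<Prod>p\<in>primes_upto x. \<Sum>e\<le>x. (1 / real p) ^ e)"
proof -
  define S where "S = primes_upto x"
  define \<phi> where "\<phi> n = restrict (\<lambda>p. multiplicity p n) S" for n :: nat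
  have prod_\<phi>: "(\<Prod>p\<in>S. p ^ \<phi> n p) = n" if "n \<in> {1..x}" for n
    using prod_primes_upto_multiplicity[of n x] that by (simp add: \<phi>_def S_def)
  have inj: "inj_on \<phi> {1..x}" by (rule inj_onI) (metis prod_\<phi>)
  have "\<phi> n \<in> PiE S (\<lambda>_. {..x})" if n: "n \<in> {1..x}" for n
  proof -
    have "multiplicity p n \<le> x" if "p \<in> S" for p
    proof -
      have "p ^ multiplicity p n \<le> n" using n by (intro dvd_imp_le multiplicity_dvd) auto
      moreover have "2 ^ multiplicity p n \<le> p ^ multiplicity p n"
        using that prime_ge_2_nat by (intro power_mono) (auto simp: S_def primes_upto_def)
      ultimately show ?thesis using n less_exp[of "multiplicity p n"] by (meson atLeastAtMost_iff le_trans less_imp_le_nat)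
    qed
    thus ?thesis by (auto simp: \<phi>_def)
  qed
  hence img: "\<phi> ` {1..x} \<subseteq> PiE S (\<lambda>_. {..x})" by blast
  have "(\<Sum>n=1..x. 1 / real n) = (\<Sum>n\<in>{1..x}. \<Prod>p\<in>S. (1 / real p) ^ \<phi> n p)"
    by (intro sum.cong refl) (simp add: power_one_over prod_dividef prod_\<phi> flip: of_nat_prod of_nat_power)
  also have "\<dots> = (\<Sum>g\<in>\<phi> ` {1..x}. \<Prod>p\<in>S. (1 / real p) ^ g p)"
    using inj by (simp add: sum.reindex)
  also have "\<dots> \<le> (\<Sum>g\<in>PiE S (\<lambda>_. {..x}). \<Prod>p\<in>S. (1 / real p) ^ g p)"
    using img by (intro sum_mono2 finite_PiE prod_nonneg) (auto simp: S_def)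
  also have "\<dots> = (\<Prod>p\<in>S. \<Sum>e\<le>x. (1 / real p) ^ e)"
    by (subst prod_sum_PiE) (auto simp: S_def)
  finally show ?thesis by (simp add: S_def)
qed

lemma geometric_sum_inverse_prime_le_exp:
  assumes "prime p"
  shows "(\<Sum>e\<le>x. (1 / real p) ^ e) \<le> exp (2 / real p)"
proof -
  define q where "q = 1 / real p"
  have q: "0 < q" "q \<le> 1/2" using prime_ge_2_nat[OF assms] by (auto simp: q_def field_simps)
  have "(\<Sum>e\<le>x. q ^ e) = (1 - q ^ Suc x) / (1 - q)"
    using q by (simp add: lessThan_Suc_atMost[symmetric] sum_gp_strict del: sum.lessThan_Suc)
  also have "\<dots> \<le> 1 / (1 - q)" using q by (intro divide_right_mono) auto
  also have "\<dots> \<le> exp (2 * q)"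
  proof -
    have "- 2 * q \<le> - q - 2 * q\<^sup>2" using q by (simp add: power2_eq_square)
    also have "\<dots> \<le> ln (1 - q)" using q by (intro ln_one_minus_pos_lower_bound) auto
    finally have "- 2 * q \<le> ln (1 - q)" .
    hence "exp (- 2 * q) \<le> exp (ln (1 - q))" by simp
    hence "exp (- 2 * q) \<le> 1 - q" using q by simp
    thus ?thesis using q by (simp add: exp_minus field_simps)
  qed
  finally show ?thesis by (simp add: q_def)
qed

lemma ln_ln_le_sum_inverse_primes:
  assumes "1 \<le> x"
  shows "ln (ln (real x + 1)) \<le> 2 * (\<Sum>p\<in>primes_upto x. 1 / real p)"
proof -
  have "ln (real x + 1) \<le> (\<Sum>n=1..x. 1 / real n)"
    using ln_le_harm[of x] by (simp add: harm_def inverse_eq_divide)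
  also have "\<dots> \<le> (\<Prod>p\<in>primes_upto x. \<Sum>e\<le>x. (1 / real p) ^ e)" by (rule harmonic_le_euler_product)
  also have "\<dots> \<le> (\<Prod>p\<in>primes_upto x. exp (2 / real p))"
    by (intro prod_mono conjI sum_nonneg geometric_sum_inverse_prime_le_exp) (auto simp: primes_upto_def)
  also have "\<dots> = exp (2 * (\<Sum>p\<in>primes_upto x. 1 / real p))"
    by (simp add: exp_sum sum_distrib_left)
  finally have "ln (real x + 1) \<le> exp (2 * (\<Sum>p\<in>primes_upto x. 1 / real p))" .
  moreover have "0 < ln (real x + 1)" using assms by simp
  ultimately have "ln (ln (real x + 1)) \<le> ln (exp (2 * (\<Sum>p\<in>primes_upto x. 1 / real p)))"
    by (subst ln_le_cancel_iff) auto
  thus ?thesis by simp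
qed

lemma sum_inverse_primes_le_dyadic:
  "(\<Sum>p\<in>primes_upto (2 ^ K). 1 / real p) \<le> 2 * (\<Sum>k<K. real (card (primes_between (2 ^ Suc k))) / 2 ^ Suc k)"
proof (induction K)
  case 0
  have "primes_upto (2 ^ 0) = {}" by (auto simp: primes_upto_def dest: prime_gt_1_nat)
  thus ?case by simp
next
  case (Suc K)
  have "1 / real p \<le> 2 / 2 ^ Suc K" if "p \<in> primes_between (2 ^ Suc K)" for p
  proof -
    have "real (2 ^ Suc K) < 2 * real p" "0 < real p"
      using that by (auto simp: primes_between_def prime_gt_0_nat simp flip: of_nat_less_iff)
    thus ?thesis by (simp add: field_simps)
  qed
  hence "(\<Sum>p\<in>primes_between (2 ^ Suc K). 1 / real p) \<le> real (card (primes_between (2 ^ Suc K))) * (2 / 2 ^ Suc K)"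
    using sum_mono[of "primes_between (2 ^ Suc K)" "\<lambda>p. 1 / real p" "\<lambda>_. 2 / 2 ^ Suc K"] by simp
  moreover have "(\<Sum>p\<in>primes_upto (2 ^ Suc K). 1 / real p) = (\<Sum>p\<in>primes_upto (2 ^ K). 1 / real p)
      + (\<Sum>p\<in>primes_between (2 ^ Suc K). 1 / real p)"
    unfolding primes_upto_double(1) using primes_upto_double(2) by (intro sum.union_disjoint) auto
  ultimately show ?case using Suc by (simp add: algebra_simps)
qed

lemma dyadic_prime_density_unbounded:
  "\<exists>K. B \<le> (\<Sum>k<K. real (card (primes_between (2 ^ Suc k))) / 2 ^ Suc k)"
proof -
  obtain K :: nat where K: "exp (exp (4 * \<bar>B\<bar>)) < 2 ^ K"
    using real_arch_pow[of 2 "exp (exp (4 * \<bar>B\<bar>))"] by auto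
  have "4 * \<bar>B\<bar> \<le> ln (ln (real (2 ^ K) + 1))"
  proof -
    have "exp (4 * \<bar>B\<bar>) \<le> ln (real (2 ^ K) + 1)"
      using K by (subst ln_ge_iff) (auto simp: add_pos_nonneg)
    thus ?thesis by (subst ln_ge_iff) (auto intro: less_le_trans[OF exp_gt_zero])
  qed
  also have "\<dots> \<le> 2 * (\<Sum>p\<in>primes_upto (2 ^ K). 1 / real p)" by (intro ln_ln_le_sum_inverse_primes) simp
  also have "\<dots> \<le> 4 * (\<Sum>k<K. real (card (primes_between (2 ^ Suc k))) / 2 ^ Suc k)"
    using sum_inverse_primes_le_dyadic[of K] by simp
  finally show ?thesis by (intro exI[of _ K]) linarith
qed

lemma liminf_eq_0_if_frequently_small:
  fixes a :: "nat \<Rightarrow> real"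
  assumes nn: "\<And>k. 0 \<le> a k" and small: "\<And>d K0. 0 < d \<Longrightarrow> \<exists>k\<ge>K0. a k < d"
  shows "liminf (\<lambda>k. ereal (a k)) = 0"
proof (rule antisym)
  show "0 \<le> liminf (\<lambda>k. ereal (a k))" using nn by (intro Liminf_bounded always_eventually) auto
  show "liminf (\<lambda>k. ereal (a k)) \<le> 0"
  proof (rule ereal_le_epsilon2)
    fix d :: real assume d: "0 < d"
    have "(INF m\<in>{n..}. ereal (a m)) \<le> ereal d" for n
    proof -
      obtain k where k: "k \<ge> n" "a k < d" using small[OF d, of n] by auto
      hence "(INF m\<in>{n..}. ereal (a m)) \<le> ereal (a k)" by (intro INF_lower) auto
      also have "\<dots> \<le> ereal d" using k by simp
      finally show ?thesis .
    qed
    thus "liminf (\<lambda>k. ereal (a k)) \<le> 0 + ereal d" by (simp add: liminf_SUP_INF SUP_least)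
  qed
qed

lemma sum_inverse_powers_two_le_1: "(\<Sum>j<J. 1 / 2 ^ Suc j :: real) \<le> 1"
proof -
  have "(\<Sum>j<J. 1 / 2 ^ Suc j :: real) = 1 - 1 / 2 ^ J"
    by (induction J) (simp_all add: field_simps)
  thus ?thesis by simp
qed

text \<open>Otherwise \<open>N j \<le> I j / \<epsilon> + \<bar>N0\<bar>\<close> eventually, which bounds the second series
  by the first.\<close>
lemma frequently_small_ratio:
  fixes I N :: "nat \<Rightarrow> real"
  assumes I_nn: "\<And>j. 0 \<le> I j" and N_nn: "\<And>j. 0 \<le> N j"
    and I_bounded: "\<And>J. (\<Sum>j<J. I j / 2 ^ Suc j) \<le> B"
    and N_unbounded: "\<And>B'. \<exists>J. B' \<le> (\<Sum>j<J. N j / 2 ^ Suc j)"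
    and \<epsilon>: "0 < \<epsilon>"
  shows "\<exists>j\<ge>J0. I j \<le> \<epsilon> * N j \<and> N0 \<le> N j"
proof (rule ccontr)
  assume no_good: "\<not> (\<exists>j\<ge>J0. I j \<le> \<epsilon> * N j \<and> N0 \<le> N j)"
  have bad: "N j \<le> I j / \<epsilon> + \<bar>N0\<bar>" if "j \<ge> J0" for j
  proof (cases "I j \<le> \<epsilon> * N j")
    case True
    hence "N j < N0" using no_good that by auto
    moreover have "0 \<le> I j / \<epsilon>" using I_nn[of j] \<epsilon> by simp
    ultimately show ?thesis by linarith
  next
    case False
    hence "N j < I j / \<epsilon>" using \<epsilon> by (simp add: field_simps)
    thus ?thesis by linarith
  qed
  define S0 where "S0 = (\<Sum>j<J0. N j / 2 ^ Suc j)"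
  obtain J where J: "S0 + B / \<epsilon> + \<bar>N0\<bar> + 1 \<le> (\<Sum>j<J. N j / 2 ^ Suc j)" using N_unbounded by blast
  have "(\<Sum>j<J. N j / 2 ^ Suc j)
      \<le> (\<Sum>j<J. (if j < J0 then N j / 2 ^ Suc j else 0) + (I j / 2 ^ Suc j / \<epsilon> + \<bar>N0\<bar> * (1 / 2 ^ Suc j)))"
  proof (rule sum_mono)
    fix j
    have "N j / 2 ^ Suc j \<le> (I j / \<epsilon> + \<bar>N0\<bar>) / 2 ^ Suc j" if "j \<ge> J0"
      using bad[OF that] by (intro divide_right_mono) auto
    thus "N j / 2 ^ Suc j \<le> (if j < J0 then N j / 2 ^ Suc j else 0) + (I j / 2 ^ Suc j / \<epsilon> + \<bar>N0\<bar> * (1 / 2 ^ Suc j))"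
      using I_nn[of j] \<epsilon> by (cases "j < J0") (simp_all add: add_divide_distrib mult_ac)
  qed
  also have "\<dots> = (\<Sum>j<J. if j < J0 then N j / 2 ^ Suc j else 0) + (\<Sum>j<J. I j / 2 ^ Suc j) / \<epsilon>
      + \<bar>N0\<bar> * (\<Sum>j<J. 1 / 2 ^ Suc j)"
    by (simp add: sum.distrib sum_divide_distrib sum_distrib_left)
  also have "(\<Sum>j<J. if j < J0 then N j / 2 ^ Suc j else 0) \<le> S0"
    unfolding S0_def using N_nn by (simp add: sum.If_cases Int_def) (intro sum_mono2; auto)
  also have "(\<Sum>j<J. I j / 2 ^ Suc j) / \<epsilon> \<le> B / \<epsilon>" using I_bounded \<epsilon> by (simp add: divide_right_mono)
  also have "\<bar>N0\<bar> * (\<Sum>j<J. 1 / 2 ^ Suc j) \<le> \<bar>N0\<bar> * 1"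
    by (intro mult_left_mono sum_inverse_powers_two_le_1) auto
  finally show False using J by simp
qed

lemma deviation_bound_lt:
  fixes d e I N :: real
  assumes d: "0 < d" "d \<le> 1" and e: "e = d / 8" and I: "I \<le> e\<^sup>2 * d / 2048 * N"
    and N1: "384 / e\<^sup>2 \<le> N" and N2: "2048 / (e\<^sup>2 * d) \<le> N"
  shows "0 < N * e\<^sup>2 / 64 - ln 4"
    and "2 * e + 2 * (I + 1) / (N * e\<^sup>2 / 64 - ln 4) + 8 * exp (- N * e\<^sup>2 / 64) < d"
proof -
  have e2: "0 < e\<^sup>2" using d e by simp
  have Ne: "384 \<le> N * e\<^sup>2" and Ned: "2048 \<le> N * e\<^sup>2 * d"
    using N1 N2 e2 d by (simp_all add: field_simps)
  have N: "0 < N" using Ne e2 by (smt (verit) zero_less_mult_pos2)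
  have "ln (4::real) \<le> 3" using ln_le_minus_one[of 4] by simp
  hence L: "N * e\<^sup>2 / 128 \<le> N * e\<^sup>2 / 64 - ln 4" using Ne by simp
  moreover have L_pos: "0 < N * e\<^sup>2 / 128" using Ne by simp
  ultimately show "0 < N * e\<^sup>2 / 64 - ln 4" by simp
  have "2 * (I + 1) \<le> 2 * (e\<^sup>2 * d / 2048 * N + 1)" using I by (intro mult_left_mono add_right_mono) auto
  hence "2 * (I + 1) / (N * e\<^sup>2 / 64 - ln 4) \<le> 2 * (e\<^sup>2 * d / 2048 * N + 1) / (N * e\<^sup>2 / 128)"
    using L L_pos e2 d N by (intro frac_le) auto
  also have "\<dots> = d / 8 + 256 / (N * e\<^sup>2)" using N e2 by (simp add: field_simps)
  also have "256 / (N * e\<^sup>2) \<le> d / 8"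
    using Ned d e2 N by (simp add: field_simps)
  finally have T1: "2 * (I + 1) / (N * e\<^sup>2 / 64 - ln 4) \<le> d / 4" by simp
  have "N * e\<^sup>2 / 64 \<le> exp (N * e\<^sup>2 / 64)" using exp_ge_add_one_self[of "N * e\<^sup>2 / 64"] by linarith
  hence "exp (- N * e\<^sup>2 / 64) \<le> 64 / (N * e\<^sup>2)"
    using N e2 by (simp add: exp_minus field_simps)
  also have "\<dots> \<le> d / 32" using Ned d e2 N by (simp add: field_simps)
  finally show "2 * e + 2 * (I + 1) / (N * e\<^sup>2 / 64 - ln 4) + 8 * exp (- N * e\<^sup>2 / 64) < d"
    using T1 e d by linarith
qed

lemma norm_average_le_1:
  fixes g :: "'p \<Rightarrow> complex"
  assumes "\<And>p. p \<in> S \<Longrightarrow> cmod (g p) \<le> 1"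
  shows "cmod ((\<Sum>p\<in>S. g p) / of_nat (card S)) \<le> 1"
proof (cases "card S = 0")
  case False
  have "cmod (\<Sum>p\<in>S. g p) \<le> (\<Sum>p\<in>S. 1)" using assms by (intro order.trans[OF norm_sum] sum_mono) auto
  thus ?thesis using False by (simp add: norm_divide field_simps)
qed simp

definition residue_vectors :: "nat set \<Rightarrow> (nat \<Rightarrow> nat) set" where
  "residue_vectors T = PiE T (\<lambda>p. {..<p})"

definition words :: "'a set \<Rightarrow> nat \<Rightarrow> 'a list set" where
  "words A n = {u. set u \<subseteq> A \<and> length u = n}"

lemma finite_residue_vectors [simp]: "finite T \<Longrightarrow> finite (residue_vectors T)"
  unfolding residue_vectors_def by (intro finite_PiE) auto

lemma card_residue_vectors: "finite T \<Longrightarrow> card (residue_vectors T) = (\<Prod>p\<in>T. p)"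
  unfolding residue_vectors_def by (simp add: card_PiE)

lemma card_residue_vectors_pos:
  "finite T \<Longrightarrow> T \<subseteq> {p. prime p} \<Longrightarrow> 0 < card (residue_vectors T)"
  by (auto simp: card_residue_vectors prime_gt_0_nat intro!: prod_pos)

lemma restrict_eq_residue_vector_iff:
  "c \<in> residue_vectors T \<Longrightarrow> restrict b T = c \<longleftrightarrow> (\<forall>p\<in>T. b p = c p)"
  by (auto simp: residue_vectors_def PiE_def extensional_def fun_eq_iff)

lemma bij_betw_merge_residue_vectors:
  assumes "T1 \<inter> T2 = {}"
  shows "bij_betw (merge T1 T2) (residue_vectors T1 \<times> residue_vectors T2) (residue_vectors (T1 \<union> T2))"
proof (rule bij_betwI[where g = "\<lambda>b. (restrict b T1, restrict b T2)"])
  show "merge T1 T2 \<in> residue_vectors T1 \<times> residue_vectors T2 \<rightarrow> residue_vectors (T1 \<union> T2)"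
    using assms by (auto simp: residue_vectors_def PiE_iff)
  show "(\<lambda>b. (restrict b T1, restrict b T2)) \<in> residue_vectors (T1 \<union> T2) \<rightarrow> residue_vectors T1 \<times> residue_vectors T2"
    by (auto simp: residue_vectors_def)
  fix z assume "z \<in> residue_vectors T1 \<times> residue_vectors T2"
  thus "(restrict (merge T1 T2 z) T1, restrict (merge T1 T2 z) T2) = z"
    using assms by (auto simp: residue_vectors_def PiE_restrict)
next
  fix b assume "b \<in> residue_vectors (T1 \<union> T2)"
  thus "merge T1 T2 (restrict b T1, restrict b T2) = b"
    by (simp add: residue_vectors_def PiE_restrict)
qed

lemma sum_residue_vectors_Un:
  assumes "T1 \<inter> T2 = {}"
  shows "(\<Sum>b\<in>residue_vectors (T1 \<union> T2). g b)
    = (\<Sum>c\<in>residue_vectors T1. \<Sum>w\<in>residue_vectors T2. g (merge T1 T2 (c, w)))"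
  using sum.reindex_bij_betw[OF bij_betw_merge_residue_vectors[OF assms], of g]
  by (simp add: sum.cartesian_product')

lemma card_residue_vectors_Un:
  "T1 \<inter> T2 = {} \<Longrightarrow>
    card (residue_vectors (T1 \<union> T2)) = card (residue_vectors T1) * card (residue_vectors T2)"
  using bij_betw_same_card[OF bij_betw_merge_residue_vectors] by (simp add: card_cartesian_product)

lemma merge_in_residue_vectors:
  "T1 \<inter> T2 = {} \<Longrightarrow> c \<in> residue_vectors T1 \<Longrightarrow> w \<in> residue_vectors T2 \<Longrightarrow>
    merge T1 T2 (c, w) \<in> residue_vectors (T1 \<union> T2)"
  using bij_betw_merge_residue_vectors[of T1 T2] by (auto simp: bij_betw_def)

definition shift_residues :: "nat \<Rightarrow> nat set \<Rightarrow> (nat \<Rightarrow> nat) \<Rightarrow> nat \<Rightarrow> nat" where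
  "shift_residues i T c = restrict (\<lambda>p. (c p + i) mod p) T"

lemma bij_betw_shift_residues:
  assumes T: "finite T" "T \<subseteq> {p. prime p}"
  shows "bij_betw (shift_residues i T) (residue_vectors T) (residue_vectors T)"
proof -
  have into: "shift_residues i T ` residue_vectors T \<subseteq> residue_vectors T"
    using T by (auto simp: shift_residues_def residue_vectors_def prime_gt_0_nat)
  have inj: "inj_on (shift_residues i T) (residue_vectors T)"
  proof (rule inj_onI)
    fix a b assume a: "a \<in> residue_vectors T" and b: "b \<in> residue_vectors T"
      and eq: "shift_residues i T a = shift_residues i T b"
    show "a = b"
    proof (rule PiE_ext[OF a[unfolded residue_vectors_def] b[unfolded residue_vectors_def]])
      fix p assume p: "p \<in> T"
      have "(a p + i) mod p = (b p + i) mod p"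
        using fun_cong[OF eq, of p] p by (simp add: shift_residues_def)
      hence "a p mod p = b p mod p" by (simp add: mod_eq_iff_dvd_symdiff_nat)
      moreover have "a p < p" "b p < p" using a b p by (auto simp: residue_vectors_def)
      ultimately show "a p = b p" by simp
    qed
  qed
  moreover have "shift_residues i T ` residue_vectors T = residue_vectors T"
    using endo_inj_surj[OF finite_residue_vectors[OF T(1)] into inj] .
  ultimately show ?thesis by (simp add: bij_betw_def)
qed

lemma finite_words [simp]: "finite A \<Longrightarrow> finite (words A n)"
  unfolding words_def by (rule finite_lists_length_eq)

lemma sum_words_add:
  "(\<Sum>w\<in>words A (m + n). g w) = (\<Sum>u\<in>words A m. \<Sum>v\<in>words A n. g (u @ v))"
proof -
  have "bij_betw (\<lambda>(u, v). u @ v) (words A m \<times> words A n) (words A (m + n))"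
  proof (rule bij_betwI[where g = "\<lambda>w. (take m w, drop m w)"])
    show "(\<lambda>w. (take m w, drop m w)) \<in> words A (m + n) \<rightarrow> words A m \<times> words A n"
      by (auto simp: words_def dest: in_set_takeD in_set_dropD)
  qed (auto simp: words_def)
  from sum.reindex_bij_betw[OF this, of g] show ?thesis
    by (simp add: sum.cartesian_product')
qed

lemma (in finite_measure) measure_sum_fibers:
  assumes K: "finite K" and meas: "\<And>k. k \<in> K \<Longrightarrow> {\<omega>\<in>space M. V \<omega> = k \<and> Q \<omega>} \<in> sets M"
  shows "measure M {\<omega>\<in>space M. V \<omega> \<in> K \<and> Q \<omega>} = (\<Sum>k\<in>K. measure M {\<omega>\<in>space M. V \<omega> = k \<and> Q \<omega>})"
proof -
  have "{\<omega>\<in>space M. V \<omega> \<in> K \<and> Q \<omega>} = (\<Union>k\<in>K. {\<omega>\<in>space M. V \<omega> = k \<and> Q \<omega>})" by auto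
  also have "measure M \<dots> = (\<Sum>k\<in>K. measure M {\<omega>\<in>space M. V \<omega> = k \<and> Q \<omega>})"
    by (rule measure_finite_Union) (use K meas in \<open>auto simp: disjoint_family_on_def emeasure_eq_measure\<close>)
  finally show ?thesis .
qed

lemma measurable_countable_fibers:
  assumes K: "countable K" and range: "\<And>\<omega>. \<omega> \<in> space M \<Longrightarrow> V \<omega> \<in> K"
    and meas: "\<And>k. k \<in> K \<Longrightarrow> {\<omega>\<in>space M. V \<omega> = k} \<in> sets M"
  shows "V \<in> M \<rightarrow>\<^sub>M count_space UNIV"
proof -
  have "V \<in> M \<rightarrow>\<^sub>M count_space K"
  proof (subst measurable_count_space_eq_countable[OF K], intro conjI ballI)
    show "V \<in> space M \<rightarrow> K" using range by auto
  next
    fix k assume "k \<in> K"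
    moreover have "V -` {k} \<inter> space M = {\<omega>\<in>space M. V \<omega> = k}" by auto
    ultimately show "V -` {k} \<inter> space M \<in> sets M" using meas by simp
  qed
  moreover have "(\<lambda>z. z) \<in> count_space K \<rightarrow>\<^sub>M count_space UNIV" by simp
  ultimately show ?thesis by (rule measurable_compose[where f = V and g = "\<lambda>z. z", simplified])
qed

lemma (in prob_space) integral_finite_valued:
  fixes h :: "'b \<Rightarrow> real"
  assumes V: "V \<in> M \<rightarrow>\<^sub>M count_space UNIV" and K: "finite K" and ae: "AE \<omega> in M. V \<omega> \<in> K"
  shows "integrable M (\<lambda>\<omega>. h (V \<omega>))"
    and "integral\<^sup>L M (\<lambda>\<omega>. h (V \<omega>)) = (\<Sum>k\<in>K. h k * measure M {\<omega>\<in>space M. V \<omega> = k})"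
proof -
  define g where "g \<omega> = (\<Sum>k\<in>K. h k * indicator {\<omega>\<in>space M. V \<omega> = k} \<omega>)" for \<omega>
  have sets: "{\<omega>\<in>space M. V \<omega> = k} \<in> sets M" for k
    using measurable_sets[OF V, of "{k}"] by (simp add: vimage_def Int_def conj_commute)
  have int_summand: "integrable M (\<lambda>\<omega>. h k * indicator {\<omega>\<in>space M. V \<omega> = k} \<omega>)" for k
    using sets by (intro integrable_mult_right integrable_real_indicator) (auto simp: emeasure_eq_measure)
  have "AE \<omega> in M. h (V \<omega>) = g \<omega>"
    using ae
  proof (rule AE_mp, intro AE_I2 impI)
    fix \<omega> assume "\<omega> \<in> space M" "V \<omega> \<in> K"
    hence "g \<omega> = (\<Sum>k\<in>K. if k = V \<omega> then h k else 0)"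
      unfolding g_def by (intro sum.cong) (auto simp: indicator_def)
    also have "\<dots> = h (V \<omega>)" using K \<open>V \<omega> \<in> K\<close> by simp
    finally show "h (V \<omega>) = g \<omega>" by simp
  qed
  moreover have h_meas: "(\<lambda>\<omega>. h (V \<omega>)) \<in> borel_measurable M"
    using V by (rule measurable_compose) simp
  moreover have g_int: "integrable M g" unfolding g_def using int_summand by auto
  ultimately show "integrable M (\<lambda>\<omega>. h (V \<omega>))"
    using integrable_cong_AE borel_measurable_integrable by blast
  have "integral\<^sup>L M (\<lambda>\<omega>. h (V \<omega>)) = integral\<^sup>L M g"
    using h_meas g_int \<open>AE \<omega> in M. h (V \<omega>) = g \<omega>\<close> by (intro integral_cong_AE) auto
  also have "\<dots> = (\<Sum>k\<in>K. integral\<^sup>L M (\<lambda>\<omega>. h k * indicator {\<omega>\<in>space M. V \<omega> = k} \<omega>))"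
    unfolding g_def using int_summand by (rule Bochner_Integration.integral_sum)
  also have "\<dots> = (\<Sum>k\<in>K. h k * measure M {\<omega>\<in>space M. V \<omega> = k})"
    using sets by (simp add: Int_absorb2 sets.sets_into_space)
  finally show "integral\<^sup>L M (\<lambda>\<omega>. h (V \<omega>)) = (\<Sum>k\<in>K. h k * measure M {\<omega>\<in>space M. V \<omega> = k})" .
qed

section \<open>The entropy of windows given the small residues\<close>

locale residue_process = prob_space M
  for M :: "'w measure" +
  fixes A :: "'a set" and C :: nat
    and x :: "nat \<Rightarrow> 'w \<Rightarrow> 'a"
    and y :: "nat \<Rightarrow> 'w \<Rightarrow> nat"
    and f :: "nat \<Rightarrow> nat \<Rightarrow> 'a list \<Rightarrow> nat \<Rightarrow> complex"
    and W :: "nat \<Rightarrow> 'w \<Rightarrow> nat \<Rightarrow> nat"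
  assumes A: "finite A"
    and x_meas: "\<And>i. x i \<in> M \<rightarrow>\<^sub>M count_space UNIV"
    and x_range: "\<And>i \<omega>. i \<ge> 1 \<Longrightarrow> \<omega> \<in> space M \<Longrightarrow> x i \<omega> \<in> A"
    and y_meas: "\<And>p. y p \<in> M \<rightarrow>\<^sub>M count_space UNIV"
    and y_range: "\<And>p \<omega>. prime p \<Longrightarrow> \<omega> \<in> space M \<Longrightarrow> y p \<omega> < p"
    and uniform: "\<And>P b. (\<forall>p\<in>primes_upto P. b p < p) \<Longrightarrow>
        measure M {\<omega>\<in>space M. \<forall>p\<in>primes_upto P. y p \<omega> = b p}
          = 1 / real (\<Prod>p\<in>primes_upto P. p)"
    and cond_stationary: "\<And>P b i m (S :: 'a list set). (\<forall>p\<in>primes_upto P. b p < p) \<Longrightarrow>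
        cprob M (\<lambda>\<omega>. window x 0 m \<omega> \<in> S) (\<lambda>\<omega>. \<forall>p\<in>primes_upto P. y p \<omega> = b p)
          = cprob M (\<lambda>\<omega>. window x i m \<omega> \<in> S)
              (\<lambda>\<omega>. \<forall>p\<in>primes_upto P. y p \<omega> = (b p + i) mod p)"
    and f_bound: "\<And>k p X r. p \<in> primes_between (2^k) \<Longrightarrow> length X = C * 2^k \<Longrightarrow>
        set X \<subseteq> A \<Longrightarrow> r < p \<Longrightarrow> cmod (f (2^k) p X r) \<le> 1"
    and W_meas: "\<And>k p. (\<lambda>\<omega>. W (2^k) \<omega> p) \<in> M \<rightarrow>\<^sub>M count_space UNIV"
    and W_distr: "\<And>k b.
        measure M {\<omega>\<in>space M. \<forall>p\<in>primes_between (2^k). W (2^k) \<omega> p = b p}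
          = measure M {\<omega>\<in>space M. \<forall>p\<in>primes_between (2^k). y p \<omega> = b p}"
    and W_indep: "\<And>k b (S :: 'a list set).
        measure M {\<omega>\<in>space M. window x 0 (C * 2^k) \<omega> \<in> S
                      \<and> (\<forall>p\<in>primes_between (2^k). W (2^k) \<omega> p = b p)}
          = measure M {\<omega>\<in>space M. window x 0 (C * 2^k) \<omega> \<in> S}
            * measure M {\<omega>\<in>space M. \<forall>p\<in>primes_between (2^k). W (2^k) \<omega> p = b p}"
begin

lemma length_window [simp]: "length (window x i n \<omega>) = n"
  by (simp add: window_def)

lemma window_0 [simp]: "window x i 0 \<omega> = []"
  by (simp add: window_def)

lemma window_eq_iff:
  "window x i n \<omega> = u \<longleftrightarrow> length u = n \<and> (\<forall>j\<in>{..<n}. x (i + 1 + j) \<omega> = u ! j)"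
  by (auto simp: list_eq_iff_nth_eq window_def simp del: upt_Suc)

lemma window_in_words: "\<omega> \<in> space M \<Longrightarrow> window x i n \<omega> \<in> words A n"
  by (auto simp: words_def window_def intro!: x_range)

lemma window_add: "window x i (m + n) \<omega> = window x i m \<omega> @ window x (i + m) n \<omega>"
proof -
  have "[i+1..<i+m+1+n] = [i+1..<i+m+1] @ [i+m+1..<i+m+1+n]" by (rule upt_add_eq_append) simp
  thus ?thesis unfolding window_def by (simp del: upt_Suc add: algebra_simps)
qed

lemma window_add_eq_append_iff:
  "u \<in> words A m \<Longrightarrow> window x i (m + n) \<omega> = u @ v \<longleftrightarrow> window x i m \<omega> = u \<and> window x (i + m) n \<omega> = v"
  by (simp add: window_add words_def append_eq_append_conv)

lemma pred_window_eq [measurable]: "Measurable.pred M (\<lambda>\<omega>. window x i n \<omega> = u)"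
proof -
  have "Measurable.pred M (\<lambda>\<omega>. x j \<omega> = a)" for j a
    using measurable_sets[OF x_meas, of "{a}"] by (simp add: pred_def vimage_def Int_def conj_commute)
  thus ?thesis unfolding window_eq_iff by measurable
qed

lemma pred_residues_eq [measurable]: "finite T \<Longrightarrow> Measurable.pred M (\<lambda>\<omega>. \<forall>p\<in>T. y p \<omega> = c p)"
proof -
  have "Measurable.pred M (\<lambda>\<omega>. y p \<omega> = a)" for p a
    using measurable_sets[OF y_meas, of "{a}"] by (simp add: pred_def vimage_def Int_def conj_commute)
  thus "finite T \<Longrightarrow> ?thesis" by measurable
qed

lemma pred_W_eq [measurable]: "finite T \<Longrightarrow> Measurable.pred M (\<lambda>\<omega>. \<forall>p\<in>T. W (2^k) \<omega> p = c p)"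
proof -
  have "Measurable.pred M (\<lambda>\<omega>. W (2^k) \<omega> p = a)" for p a
    using measurable_sets[OF W_meas, of "{a}"] by (simp add: pred_def vimage_def Int_def conj_commute)
  thus "finite T \<Longrightarrow> ?thesis" by measurable
qed

lemma restrict_residues_in: "\<omega> \<in> space M \<Longrightarrow> T \<subseteq> {p. prime p} \<Longrightarrow> restrict (\<lambda>p. y p \<omega>) T \<in> residue_vectors T"
  using y_range by (auto simp: residue_vectors_def)

lemma measure_residues_eq:
  assumes "c \<in> residue_vectors (primes_upto P)"
  shows "measure M {\<omega>\<in>space M. \<forall>p\<in>primes_upto P. y p \<omega> = c p}
    = 1 / real (card (residue_vectors (primes_upto P)))"
proof -
  have "\<forall>p\<in>primes_upto P. c p < p" using assms by (auto simp: residue_vectors_def)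
  thus ?thesis using uniform[of P c] by (simp add: card_residue_vectors of_nat_prod)
qed

definition joint_prob :: "nat \<Rightarrow> nat \<Rightarrow> nat set \<Rightarrow> (nat \<Rightarrow> nat) \<Rightarrow> 'a list \<Rightarrow> real" where
  "joint_prob i n T c u = measure M {\<omega>\<in>space M. window x i n \<omega> = u \<and> (\<forall>p\<in>T. y p \<omega> = c p)}"

lemma joint_prob_nonneg: "0 \<le> joint_prob i n T c u"
  by (simp add: joint_prob_def)

lemma joint_prob_le: "finite T \<Longrightarrow> joint_prob i n T c u \<le> measure M {\<omega>\<in>space M. \<forall>p\<in>T. y p \<omega> = c p}"
  unfolding joint_prob_def by (intro finite_measure_mono) auto

lemma sum_joint_prob:
  assumes "finite T"
  shows "(\<Sum>u\<in>words A n. joint_prob i n T c u) = measure M {\<omega>\<in>space M. \<forall>p\<in>T. y p \<omega> = c p}"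
proof -
  have "measure M {\<omega>\<in>space M. \<forall>p\<in>T. y p \<omega> = c p}
      = measure M {\<omega>\<in>space M. window x i n \<omega> \<in> words A n \<and> (\<forall>p\<in>T. y p \<omega> = c p)}"
    using window_in_words by (intro arg_cong[where f="measure M"]) auto
  also have "\<dots> = (\<Sum>u\<in>words A n. joint_prob i n T c u)"
    unfolding joint_prob_def using assms A by (intro measure_sum_fibers) auto
  finally show ?thesis by simp
qed

lemma sum_joint_prob_right:
  assumes "finite T" "u \<in> words A m"
  shows "(\<Sum>v\<in>words A n. joint_prob i (m + n) T c (u @ v)) = joint_prob i m T c u"
proof -
  have "(\<Sum>v\<in>words A n. joint_prob i (m + n) T c (u @ v))
      = (\<Sum>v\<in>words A n. measure M {\<omega>\<in>space M. window x (i + m) n \<omega> = v \<and> window x i m \<omega> = u \<and> (\<forall>p\<in>T. y p \<omega> = c p)})"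
    unfolding joint_prob_def using assms(2) by (intro sum.cong refl arg_cong[where f="measure M"]) (auto simp: window_add_eq_append_iff)
  also have "\<dots> = measure M {\<omega>\<in>space M. window x (i + m) n \<omega> \<in> words A n \<and> window x i m \<omega> = u \<and> (\<forall>p\<in>T. y p \<omega> = c p)}"
    using assms A by (intro measure_sum_fibers[symmetric]) auto
  also have "\<dots> = joint_prob i m T c u"
    unfolding joint_prob_def using window_in_words by (intro arg_cong[where f="measure M"]) auto
  finally show ?thesis .
qed

lemma sum_joint_prob_left:
  assumes "finite T" "v \<in> words A n"
  shows "(\<Sum>u\<in>words A m. joint_prob i (m + n) T c (u @ v)) = joint_prob (i + m) n T c v"
proof -
  have "(\<Sum>u\<in>words A m. joint_prob i (m + n) T c (u @ v))
      = (\<Sum>u\<in>words A m. measure M {\<omega>\<in>space M. window x i m \<omega> = u \<and> window x (i + m) n \<omega> = v \<and> (\<forall>p\<in>T. y p \<omega> = c p)})"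
    unfolding joint_prob_def by (intro sum.cong refl arg_cong[where f="measure M"]) (auto simp: window_add_eq_append_iff)
  also have "\<dots> = measure M {\<omega>\<in>space M. window x i m \<omega> \<in> words A m \<and> window x (i + m) n \<omega> = v \<and> (\<forall>p\<in>T. y p \<omega> = c p)}"
    using assms A by (intro measure_sum_fibers[symmetric]) auto
  also have "\<dots> = joint_prob (i + m) n T c v"
    unfolding joint_prob_def using window_in_words by (intro arg_cong[where f="measure M"]) auto
  finally show ?thesis .
qed

lemma sum_joint_prob_merge:
  assumes "finite T1" "finite T2" "T2 \<subseteq> {p. prime p}" "T1 \<inter> T2 = {}"
  shows "(\<Sum>w\<in>residue_vectors T2. joint_prob i n (T1 \<union> T2) (merge T1 T2 (c, w)) u) = joint_prob i n T1 c u"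
proof -
  have "(\<Sum>w\<in>residue_vectors T2. joint_prob i n (T1 \<union> T2) (merge T1 T2 (c, w)) u)
      = (\<Sum>w\<in>residue_vectors T2. measure M {\<omega>\<in>space M. restrict (\<lambda>p. y p \<omega>) T2 = w \<and> window x i n \<omega> = u \<and> (\<forall>p\<in>T1. y p \<omega> = c p)})"
    unfolding joint_prob_def using assms(4)
    by (intro sum.cong refl arg_cong[where f="measure M"]) (auto simp: restrict_eq_residue_vector_iff split_merge)
  also have "\<dots> = measure M {\<omega>\<in>space M. restrict (\<lambda>p. y p \<omega>) T2 \<in> residue_vectors T2 \<and> window x i n \<omega> = u \<and> (\<forall>p\<in>T1. y p \<omega> = c p)}"
    using assms by (intro measure_sum_fibers[symmetric]) (auto simp: restrict_eq_residue_vector_iff cong: conj_cong)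
  also have "\<dots> = joint_prob i n T1 c u"
    unfolding joint_prob_def using restrict_residues_in assms(3) by (intro arg_cong[where f="measure M"]) auto
  finally show ?thesis .
qed

lemma joint_prob_shift:
  assumes c: "c \<in> residue_vectors (primes_upto Q)"
  shows "joint_prob i n (primes_upto Q) (shift_residues i (primes_upto Q) c) u = joint_prob 0 n (primes_upto Q) c u"
proof -
  let ?T = "primes_upto Q" and ?N = "real (card (residue_vectors (primes_upto Q)))"
  have "shift_residues i ?T c \<in> residue_vectors ?T"
    using bij_betw_shift_residues[OF finite_primes_upto primes_upto_subset_prime] c by (auto simp: bij_betw_def)
  hence "joint_prob i n ?T (shift_residues i ?T c) u / (1 / ?N)
      = cprob M (\<lambda>\<omega>. window x i n \<omega> \<in> {u}) (\<lambda>\<omega>. \<forall>p\<in>?T. y p \<omega> = (c p + i) mod p)"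
    by (simp add: cprob_def joint_prob_def shift_residues_def measure_residues_eq[symmetric])
  also have "\<dots> = cprob M (\<lambda>\<omega>. window x 0 n \<omega> \<in> {u}) (\<lambda>\<omega>. \<forall>p\<in>?T. y p \<omega> = c p)"
    using c by (intro cond_stationary[symmetric]) (auto simp: residue_vectors_def)
  also have "\<dots> = joint_prob 0 n ?T c u / (1 / ?N)"
    using c by (simp add: cprob_def joint_prob_def measure_residues_eq)
  finally show ?thesis using c by fastforce
qed

text \<open>\<open>entropy_term i n T c\<close> is \<open>P(y\<^sub>T = c) H(x\<^sub>i\<^sub>+\<^sub>1, ..., x\<^sub>i\<^sub>+\<^sub>n | y\<^sub>T = c)\<close> when \<open>y\<^sub>T\<close> is
  uniform, and \<open>cond_entropy\<close> is the conditional entropy of the window given \<open>y\<^sub>T\<close>.\<close>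
definition entropy_term :: "nat \<Rightarrow> nat \<Rightarrow> nat set \<Rightarrow> (nat \<Rightarrow> nat) \<Rightarrow> real" where
  "entropy_term i n T c = - (\<Sum>u\<in>words A n.
     joint_prob i n T c u * ln (joint_prob i n T c u * real (card (residue_vectors T))))"

definition cond_entropy :: "nat \<Rightarrow> nat \<Rightarrow> nat set \<Rightarrow> real" where
  "cond_entropy i n T = (\<Sum>c\<in>residue_vectors T. entropy_term i n T c)"

lemma cond_entropy_nonneg: "0 \<le> cond_entropy i n (primes_upto Q)"
proof -
  let ?T = "primes_upto Q" and ?N = "real (card (residue_vectors (primes_upto Q)))"
  have N: "0 < ?N" using card_residue_vectors_pos[OF finite_primes_upto primes_upto_subset_prime] by simp
  have "joint_prob i n ?T c u * ln (joint_prob i n ?T c u * ?N) \<le> 0"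
    if "c \<in> residue_vectors ?T" for c u
  proof (cases "joint_prob i n ?T c u = 0")
    case False
    hence "0 < joint_prob i n ?T c u * ?N" using N joint_prob_nonneg[of i n ?T c u] by simp
    moreover have "joint_prob i n ?T c u * ?N \<le> 1"
      using joint_prob_le[of ?T i n c u] measure_residues_eq[OF that] N by (simp add: field_simps)
    ultimately show ?thesis using joint_prob_nonneg[of i n ?T c u] by (simp add: mult_nonneg_nonpos)
  qed simp
  thus ?thesis unfolding cond_entropy_def entropy_term_def
    by (intro sum_nonneg) (simp add: sum_nonpos)
qed

lemma cond_entropy_shift: "cond_entropy i n (primes_upto Q) = cond_entropy 0 n (primes_upto Q)"
proof -
  let ?T = "primes_upto Q"
  have "cond_entropy i n ?T = (\<Sum>c\<in>residue_vectors ?T. entropy_term i n ?T (shift_residues i ?T c))"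
    unfolding cond_entropy_def
    by (rule sum.reindex_bij_betw[symmetric, OF bij_betw_shift_residues[OF finite_primes_upto primes_upto_subset_prime]])
  thus ?thesis by (simp add: cond_entropy_def entropy_term_def joint_prob_shift)
qed

text \<open>Subadditivity of entropy, applied to the two halves of a window inside each cell \<open>y\<^sub>T = c\<close>.\<close>
lemma entropy_term_add_le:
  assumes c: "c \<in> residue_vectors (primes_upto Q)"
  shows "entropy_term 0 (m + n) (primes_upto Q) c
    \<le> entropy_term 0 m (primes_upto Q) c + entropy_term m n (primes_upto Q) c"
proof -
  let ?T = "primes_upto Q"
  define N where "N = real (card (residue_vectors ?T))"
  have N: "0 < N"
    unfolding N_def using card_residue_vectors_pos[OF finite_primes_upto primes_upto_subset_prime] by simp
  define r where "r u v = joint_prob 0 (m + n) ?T c (u @ v) * N" for u v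
  have left: "(\<Sum>v\<in>words A n. r u v) = joint_prob 0 m ?T c u * N" if "u \<in> words A m" for u
    using sum_joint_prob_right[OF finite_primes_upto that] by (simp add: r_def sum_distrib_right[symmetric])
  have right: "(\<Sum>u\<in>words A m. r u v) = joint_prob m n ?T c v * N" if "v \<in> words A n" for v
    using sum_joint_prob_left[OF finite_primes_upto that, of 0] by (simp add: r_def sum_distrib_right[symmetric])
  have "(\<Sum>u\<in>words A m. \<Sum>v\<in>words A n. r u v) = (\<Sum>u\<in>words A m. joint_prob 0 m ?T c u) * N"
    by (simp add: left sum_distrib_right)
  also have "\<dots> = 1"
    using sum_joint_prob[OF finite_primes_upto] measure_residues_eq[OF c] N c by (auto simp: N_def)
  finally have "- (\<Sum>u\<in>words A m. \<Sum>v\<in>words A n. r u v * ln (r u v))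
     \<le> - (\<Sum>u\<in>words A m. (\<Sum>v\<in>words A n. r u v) * ln (\<Sum>v\<in>words A n. r u v))
        - (\<Sum>v\<in>words A n. (\<Sum>u\<in>words A m. r u v) * ln (\<Sum>u\<in>words A m. r u v))"
    using A N by (intro entropy_le_marginal_entropies) (auto simp: r_def joint_prob_nonneg)
  moreover have "(\<Sum>u\<in>words A m. \<Sum>v\<in>words A n. r u v * ln (r u v))
      = N * (\<Sum>w\<in>words A (m + n). joint_prob 0 (m + n) ?T c w * ln (joint_prob 0 (m + n) ?T c w * N))"
    by (simp add: sum_words_add r_def sum_distrib_left mult.assoc mult.left_commute)
  moreover have "(\<Sum>u\<in>words A m. (\<Sum>v\<in>words A n. r u v) * ln (\<Sum>v\<in>words A n. r u v))
      = N * (\<Sum>u\<in>words A m. joint_prob 0 m ?T c u * ln (joint_prob 0 m ?T c u * N))"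
    by (simp add: left sum_distrib_left mult.assoc mult.left_commute)
  moreover have "(\<Sum>v\<in>words A n. (\<Sum>u\<in>words A m. r u v) * ln (\<Sum>u\<in>words A m. r u v))
      = N * (\<Sum>v\<in>words A n. joint_prob m n ?T c v * ln (joint_prob m n ?T c v * N))"
    by (simp add: right sum_distrib_left mult.assoc mult.left_commute)
  ultimately have "N * entropy_term 0 (m + n) ?T c \<le> N * (entropy_term 0 m ?T c + entropy_term m n ?T c)"
    unfolding entropy_term_def N_def[symmetric] by (simp add: algebra_simps)
  thus ?thesis using N by (simp only: mult_le_cancel_left_pos)
qed

lemma cond_entropy_double_le:
  "cond_entropy 0 (2 * n) (primes_upto Q) \<le> 2 * cond_entropy 0 n (primes_upto Q)"
proof -
  have "cond_entropy 0 (n + n) (primes_upto Q)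
      \<le> cond_entropy 0 n (primes_upto Q) + cond_entropy n n (primes_upto Q)"
    unfolding cond_entropy_def sum.distrib[symmetric] by (rule sum_mono) (rule entropy_term_add_le)
  thus ?thesis using cond_entropy_shift[of n n Q] by (simp only: mult_2)
qed

section \<open>Entropy decrement\<close>

lemma cond_entropy_diff_eq_divergence:
  fixes i n :: nat and T1 T2 :: "nat set"
  defines "\<nu> c w u \<equiv> joint_prob i n (T1 \<union> T2) (merge T1 T2 (c, w)) u"
  assumes T: "finite T1" "finite T2" "T1 \<subseteq> {p. prime p}" "T2 \<subseteq> {p. prime p}" and disj: "T1 \<inter> T2 = {}"
  shows "cond_entropy i n T1 - cond_entropy i n (T1 \<union> T2)
    = (\<Sum>c\<in>residue_vectors T1. \<Sum>w\<in>residue_vectors T2. \<Sum>u\<in>words A n.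
        \<nu> c w u * ln (\<nu> c w u / ((\<Sum>w'\<in>residue_vectors T2. \<nu> c w' u) / real (card (residue_vectors T2)))))"
proof -
  define N1 where "N1 = real (card (residue_vectors T1))"
  define N2 where "N2 = real (card (residue_vectors T2))"
  define \<rho> where "\<rho> c u = (\<Sum>w\<in>residue_vectors T2. \<nu> c w u)" for c u
  have N1: "0 < N1" and N2: "0 < N2" using card_residue_vectors_pos T by (auto simp: N1_def N2_def)
  have N: "real (card (residue_vectors (T1 \<union> T2))) = N1 * N2"
    using card_residue_vectors_Un[OF disj] by (simp add: N1_def N2_def)
  have \<rho>: "\<rho> c u = joint_prob i n T1 c u" for c u
    unfolding \<rho>_def \<nu>_def using T(1,2,4) disj by (rule sum_joint_prob_merge)
  have "cond_entropy i n (T1 \<union> T2)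
      = - (\<Sum>c\<in>residue_vectors T1. \<Sum>w\<in>residue_vectors T2. \<Sum>u\<in>words A n. \<nu> c w u * ln (\<nu> c w u * (N1 * N2)))"
    unfolding cond_entropy_def entropy_term_def sum_residue_vectors_Un[OF disj] N
    by (simp add: \<nu>_def sum_negf)
  moreover have "cond_entropy i n T1
      = - (\<Sum>c\<in>residue_vectors T1. \<Sum>w\<in>residue_vectors T2. \<Sum>u\<in>words A n. \<nu> c w u * ln (\<rho> c u * N1))"
    unfolding cond_entropy_def entropy_term_def N1_def[symmetric]
    by (simp add: \<rho>[symmetric] sum_negf \<rho>_def sum_distrib_right sum.swap[of _ "words A n"])
  moreover have "\<nu> c w u * ln (\<nu> c w u * (N1 * N2)) - \<nu> c w u * ln (\<rho> c u * N1)
      = \<nu> c w u * ln (\<nu> c w u / (\<rho> c u / N2))" if "w \<in> residue_vectors T2" for c w u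
  proof (cases "\<nu> c w u = 0")
    case False
    hence "0 < \<nu> c w u" by (simp add: \<nu>_def joint_prob_nonneg less_le)
    moreover have "\<nu> c w u \<le> \<rho> c u"
      unfolding \<rho>_def using that T by (intro member_le_sum) (auto simp: \<nu>_def joint_prob_nonneg)
    ultimately show ?thesis using N1 N2 by (simp add: ln_mult ln_div algebra_simps)
  qed simp
  ultimately show ?thesis
    by (simp add: \<rho>_def N2_def sum_subtractf[symmetric] cong: sum.cong)
qed

lemma sum_sum_joint_prob:
  "(\<Sum>b\<in>residue_vectors (primes_upto Q). \<Sum>u\<in>words A n. joint_prob i n (primes_upto Q) b u) = 1"
proof -
  have "(\<Sum>b\<in>residue_vectors (primes_upto Q). \<Sum>u\<in>words A n. joint_prob i n (primes_upto Q) b u)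
      = (\<Sum>b\<in>residue_vectors (primes_upto Q). 1 / real (card (residue_vectors (primes_upto Q))))"
    by (intro sum.cong refl) (simp add: sum_joint_prob measure_residues_eq)
  also have "\<dots> = 1"
    using card_residue_vectors_pos[OF finite_primes_upto primes_upto_subset_prime, of Q]
    by (simp add: card_gt_0_iff)
  finally show ?thesis .
qed

definition entropy_drop :: "nat \<Rightarrow> nat \<Rightarrow> real" where
  "entropy_drop n j = cond_entropy 0 n (primes_upto (2 ^ j)) - cond_entropy 0 n (primes_upto (2 ^ Suc j))"

lemma entropy_drop_eq_divergence:
  fixes n j :: nat
  defines "\<nu> c w u \<equiv> joint_prob 0 n (primes_upto (2 ^ Suc j)) (merge (primes_upto (2 ^ j)) (primes_between (2 ^ Suc j)) (c, w)) u"
  shows "entropy_drop n j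
    = (\<Sum>c\<in>residue_vectors (primes_upto (2 ^ j)). \<Sum>w\<in>residue_vectors (primes_between (2 ^ Suc j)). \<Sum>u\<in>words A n.
        \<nu> c w u * ln (\<nu> c w u / ((\<Sum>w'\<in>residue_vectors (primes_between (2 ^ Suc j)). \<nu> c w' u)
          / real (card (residue_vectors (primes_between (2 ^ Suc j)))))))"
  unfolding entropy_drop_def \<nu>_def primes_upto_double(1)
  by (rule cond_entropy_diff_eq_divergence[OF finite_primes_upto finite_primes_between
        primes_upto_subset_prime primes_between_subset_prime primes_upto_double(2)])

lemma sum_joint_prob_merge_dyadic:
  "(\<Sum>c\<in>residue_vectors (primes_upto (2 ^ j)). \<Sum>w\<in>residue_vectors (primes_between (2 ^ Suc j)). \<Sum>u\<in>words A n.
     joint_prob 0 n (primes_upto (2 ^ Suc j)) (merge (primes_upto (2 ^ j)) (primes_between (2 ^ Suc j)) (c, w)) u) = 1"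
  using sum_sum_joint_prob[where Q = "2 ^ Suc j" and n = n and i = 0]
  unfolding primes_upto_double(1) sum_residue_vectors_Un[OF primes_upto_double(2)] .

lemma entropy_drop_nonneg: "0 \<le> entropy_drop n j"
  unfolding entropy_drop_eq_divergence
  by (rule conditional_divergence_nonneg[OF finite_residue_vectors[OF finite_primes_upto]
        finite_residue_vectors[OF finite_primes_between] finite_words[OF A] joint_prob_nonneg
        sum_joint_prob_merge_dyadic])

text \<open>An event in \<open>(u, w)\<close> that is rare for every window \<open>u\<close> when the new residues \<open>w\<close>
  are uniform stays rare under their joint law, up to the entropy drop.\<close>
lemma deviation_prob_le_entropy_drop:
  assumes rare: "\<And>u. u \<in> words A n \<Longrightarrow>
      real (card {w\<in>residue_vectors (primes_between (2 ^ Suc j)). E u w})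
        \<le> \<rho> * real (card (residue_vectors (primes_between (2 ^ Suc j))))"
    and \<rho>: "0 < \<rho>"
  shows "(\<Sum>b\<in>residue_vectors (primes_upto (2 ^ Suc j)). \<Sum>u\<in>words A n.
      if E u (restrict b (primes_between (2 ^ Suc j))) then joint_prob 0 n (primes_upto (2 ^ Suc j)) b u else 0)
      * ln (1 / \<rho>) \<le> entropy_drop n j + 1"
proof -
  let ?T1 = "primes_upto (2 ^ j)" and ?T2 = "primes_between (2 ^ Suc j)"
  have split: "(\<Sum>b\<in>residue_vectors (primes_upto (2 ^ Suc j)). G b)
      = (\<Sum>c\<in>residue_vectors ?T1. \<Sum>w\<in>residue_vectors ?T2. G (merge ?T1 ?T2 (c, w)))" for G :: "_ \<Rightarrow> real"
    by (subst primes_upto_double(1)) (rule sum_residue_vectors_Un[OF primes_upto_double(2)])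
  have new_residues: "restrict (merge ?T1 ?T2 (c, w)) ?T2 = w" if "w \<in> residue_vectors ?T2" for c w
    using that primes_upto_double(2)[of j] by (simp add: residue_vectors_def PiE_restrict)
  have mass_eq: "(\<Sum>b\<in>residue_vectors (primes_upto (2 ^ Suc j)). \<Sum>u\<in>words A n.
      if E u (restrict b ?T2) then joint_prob 0 n (primes_upto (2 ^ Suc j)) b u else 0)
    = (\<Sum>c\<in>residue_vectors ?T1. \<Sum>w\<in>residue_vectors ?T2. \<Sum>u\<in>words A n.
      if E u w then joint_prob 0 n (primes_upto (2 ^ Suc j)) (merge ?T1 ?T2 (c, w)) u else 0)"
    unfolding split by (intro sum.cong refl) (simp only: new_residues)
  show ?thesis
    unfolding mass_eq entropy_drop_eq_divergence
    by (rule conditional_divergence_event_bound[where \<nu> = "\<lambda>c w u. joint_prob 0 n (primes_upto (2 ^ Suc j)) (merge ?T1 ?T2 (c, w)) u",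
          OF finite_residue_vectors[OF finite_primes_upto] finite_residue_vectors[OF finite_primes_between]
          finite_words[OF A] joint_prob_nonneg sum_joint_prob_merge_dyadic rare \<rho>])
qed

section \<open>Concentration of \<open>fP\<close> in the new residues\<close>

text \<open>\<open>fP_mean k u\<close> is the average of \<open>fP f (2^k) u w\<close> over \<open>w \<in> residue_vectors (primes_between (2^k))\<close>.\<close>
definition fP_mean :: "nat \<Rightarrow> 'a list \<Rightarrow> complex" where
  "fP_mean k u = (\<Sum>p\<in>primes_between (2^k). (\<Sum>r<p. f (2^k) p u r) / of_nat p)
    / of_nat (card (primes_between (2^k)))"

definition deviates :: "real \<Rightarrow> nat \<Rightarrow> 'a list \<Rightarrow> (nat \<Rightarrow> nat) \<Rightarrow> bool" where
  "deviates e k u w \<longleftrightarrow> e < cmod (fP f (2^k) u w - fP_mean k u)"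

lemma fP_cong: "(\<And>p. p \<in> primes_between P \<Longrightarrow> w p = w' p) \<Longrightarrow> fP f P u w = fP f P u w'"
  unfolding fP_def by (intro arg_cong2[where f="(/)"] sum.cong refl) auto

lemma norm_fP_le_1:
  assumes "u \<in> words A (C * 2^k)" and "\<And>p. p \<in> primes_between (2^k) \<Longrightarrow> w p < p"
  shows "cmod (fP f (2^k) u w) \<le> 1"
  unfolding fP_def using assms f_bound by (intro norm_average_le_1) (auto simp: words_def)

lemma norm_fP_mean_le_1:
  assumes "u \<in> words A (C * 2^k)"
  shows "cmod (fP_mean k u) \<le> 1"
proof -
  have "cmod ((\<Sum>r<p. f (2^k) p u r) / of_nat p) \<le> 1" if "p \<in> primes_between (2^k)" for p
    using norm_average_le_1[of "{..<p}" "f (2^k) p u"] assms that f_bound by (auto simp: words_def)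
  thus ?thesis unfolding fP_mean_def by (rule norm_average_le_1)
qed

lemma norm_fP_sub_fP_mean_le:
  assumes "u \<in> words A (C * 2^k)" and "\<And>p. p \<in> primes_between (2^k) \<Longrightarrow> w p < p" and "0 \<le> e"
  shows "cmod (fP f (2^k) u w - fP_mean k u) \<le> e + (if deviates e k u w then 2 else 0)"
proof -
  have "cmod (fP f (2^k) u w - fP_mean k u) \<le> cmod (fP f (2^k) u w) + cmod (fP_mean k u)"
    by (rule norm_triangle_ineq4)
  also have "\<dots> \<le> 2" using norm_fP_le_1[OF assms(1,2)] norm_fP_mean_le_1[OF assms(1)] by simp
  finally show ?thesis using assms(3) by (auto simp: deviates_def)
qed

text \<open>Hoeffding's inequality applied to the independent summands \<open>f (2^k) p u (w p)\<close>.\<close>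
lemma card_deviates_le:
  assumes u: "u \<in> words A (C * 2^k)" and e: "0 < e" "e \<le> 1"
  shows "real (card {w\<in>residue_vectors (primes_between (2^k)). deviates e k u w})
    \<le> 4 * exp (- real (card (primes_between (2^k))) * e\<^sup>2 / 64)
      * real (card (residue_vectors (primes_between (2^k))))"
proof -
  define S where "S = primes_between (2^k)"
  define Z where "Z p r = f (2^k) p u r - (\<Sum>r'<p. f (2^k) p u r') / of_nat p" for p r
  have p_pos: "0 < p" if "p \<in> S" for p using that by (auto simp: S_def primes_between_def prime_gt_0_nat)
  have "cmod (Z p r) \<le> 2" if "p \<in> S" "r \<in> {..<p}" for p r
  proof -
    have "cmod ((\<Sum>r'<p. f (2^k) p u r') / of_nat p) \<le> 1"
      using norm_average_le_1[of "{..<p}" "f (2^k) p u"] u that f_bound by (auto simp: words_def S_def)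
    moreover have "cmod (f (2^k) p u r) \<le> 1" using u that f_bound by (auto simp: words_def S_def)
    ultimately show ?thesis unfolding Z_def using norm_triangle_ineq4 by (smt (verit))
  qed
  moreover have "(\<Sum>r<p. Z p r) = 0" if "p \<in> S" for p
    using p_pos[OF that] by (simp add: Z_def sum_subtractf)
  moreover have diff: "fP f (2^k) u w - fP_mean k u = (\<Sum>p\<in>S. Z p (w p)) / of_nat (card S)" for w
    by (simp add: fP_def fP_mean_def S_def Z_def sum_subtractf diff_divide_distrib)
  hence "real (card S) * e < cmod (\<Sum>p\<in>S. Z p (w p))" if "deviates e k u w" for w
  proof -
    have lt: "e < cmod (\<Sum>p\<in>S. Z p (w p)) / real (card S)"
      using that diff[of w] by (simp add: deviates_def norm_divide)
    hence "card S \<noteq> 0" using e by (cases "card S = 0") simp_all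
    thus ?thesis using lt by (simp add: field_simps)
  qed
  hence "{w\<in>residue_vectors S. deviates e k u w}
      \<subseteq> {w \<in> PiE S (\<lambda>p. {..<p}). real (card S) * e < cmod (\<Sum>p\<in>S. Z p (w p))}"
    by (auto simp: residue_vectors_def)
  hence "real (card {w\<in>residue_vectors S. deviates e k u w})
      \<le> real (card {w \<in> PiE S (\<lambda>p. {..<p}). real (card S) * e < cmod (\<Sum>p\<in>S. Z p (w p))})"
    by (intro of_nat_mono card_mono finite_subset[OF _ finite_residue_vectors[of S]])
      (auto simp: S_def residue_vectors_def)
  ultimately show ?thesis
    using card_PiE_complex_sum_large_le[of S "\<lambda>p. {..<p}" Z e] e
    by (simp add: S_def residue_vectors_def)
qed

lemma integral_window_residues:
  fixes h :: "'a list \<Rightarrow> (nat \<Rightarrow> nat) \<Rightarrow> real" and Q :: nat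
  defines "T \<equiv> primes_upto Q"
  shows "integrable M (\<lambda>\<omega>. h (window x 0 n \<omega>) (restrict (\<lambda>p. y p \<omega>) T))"
    and "integral\<^sup>L M (\<lambda>\<omega>. h (window x 0 n \<omega>) (restrict (\<lambda>p. y p \<omega>) T))
      = (\<Sum>b\<in>residue_vectors T. \<Sum>u\<in>words A n. h u b * joint_prob 0 n T b u)"
proof -
  define V where "V \<omega> = (window x 0 n \<omega>, restrict (\<lambda>p. y p \<omega>) T)" for \<omega>
  define K where "K = words A n \<times> residue_vectors T"
  have K: "finite K" using A by (simp add: K_def T_def)
  have range: "V \<omega> \<in> K" if "\<omega> \<in> space M" for \<omega>
    using window_in_words[OF that] restrict_residues_in[OF that primes_upto_subset_prime]
    by (simp add: V_def K_def T_def)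
  have fiber: "{\<omega>\<in>space M. V \<omega> = z} = {\<omega>\<in>space M. window x 0 n \<omega> = fst z \<and> (\<forall>p\<in>T. y p \<omega> = snd z p)}"
    if "z \<in> K" for z
    using that restrict_eq_residue_vector_iff[of "snd z" T] by (auto simp: V_def K_def)
  have "{\<omega>\<in>space M. V \<omega> = z} \<in> sets M" if "z \<in> K" for z
  proof -
    have "Measurable.pred M (\<lambda>\<omega>. window x 0 n \<omega> = fst z \<and> (\<forall>p\<in>T. y p \<omega> = snd z p))"
      unfolding T_def by measurable
    thus ?thesis unfolding fiber[OF that] pred_def .
  qed
  with K range have "V \<in> M \<rightarrow>\<^sub>M count_space UNIV"
    by (intro measurable_countable_fibers countable_finite)
  note int = integral_finite_valued[OF this K AE_I2[OF range], of "\<lambda>(u, b). h u b"]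
  from int(1) show "integrable M (\<lambda>\<omega>. h (window x 0 n \<omega>) (restrict (\<lambda>p. y p \<omega>) T))"
    by (simp add: V_def)
  have "integral\<^sup>L M (\<lambda>\<omega>. h (window x 0 n \<omega>) (restrict (\<lambda>p. y p \<omega>) T))
      = (\<Sum>z\<in>K. (case z of (u, b) \<Rightarrow> h u b) * measure M {\<omega>\<in>space M. V \<omega> = z})"
    using int(2) by (simp add: V_def)
  also have "\<dots> = (\<Sum>u\<in>words A n. \<Sum>b\<in>residue_vectors T. h u b * joint_prob 0 n T b u)"
    unfolding K_def sum.cartesian_product' by (intro sum.cong refl) (simp add: fiber K_def joint_prob_def)
  finally show "integral\<^sup>L M (\<lambda>\<omega>. h (window x 0 n \<omega>) (restrict (\<lambda>p. y p \<omega>) T))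
      = (\<Sum>b\<in>residue_vectors T. \<Sum>u\<in>words A n. h u b * joint_prob 0 n T b u)"
    by (subst sum.swap) simp
qed

lemma measure_new_residues_eq:
  assumes w: "w \<in> residue_vectors (primes_between (2 ^ Suc j))"
  shows "measure M {\<omega>\<in>space M. \<forall>p\<in>primes_between (2 ^ Suc j). y p \<omega> = w p}
    = 1 / real (card (residue_vectors (primes_between (2 ^ Suc j))))"
proof -
  let ?T1 = "primes_upto (2 ^ j)" and ?T2 = "primes_between (2 ^ Suc j)"
  have disj: "?T2 \<inter> ?T1 = {}" and union: "?T2 \<union> ?T1 = primes_upto (2 ^ Suc j)"
    using primes_upto_double[of j] by auto
  have "measure M {\<omega>\<in>space M. \<forall>p\<in>?T2. y p \<omega> = w p} = joint_prob 0 0 ?T2 w []"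
    by (simp add: joint_prob_def)
  also have "\<dots> = (\<Sum>c\<in>residue_vectors ?T1. joint_prob 0 0 (?T2 \<union> ?T1) (merge ?T2 ?T1 (w, c)) [])"
    using disj by (intro sum_joint_prob_merge[symmetric] primes_upto_subset_prime) auto
  also have "\<dots> = (\<Sum>c\<in>residue_vectors ?T1. 1 / real (card (residue_vectors (?T2 \<union> ?T1))))"
    using merge_in_residue_vectors[OF disj w] unfolding union
    by (intro sum.cong refl) (simp add: joint_prob_def measure_residues_eq)
  also have "\<dots> = 1 / real (card (residue_vectors ?T2))"
    unfolding card_residue_vectors_Un[OF disj]
    using card_residue_vectors_pos[OF finite_primes_upto primes_upto_subset_prime, of "2 ^ j"]
      card_residue_vectors_pos[OF finite_primes_between primes_between_subset_prime, of "2 ^ Suc j"]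
    by (simp add: card_gt_0_iff)
  finally show ?thesis .
qed

lemma sum_measure_window_eq_1: "(\<Sum>u\<in>words A n. measure M {\<omega>\<in>space M. window x 0 n \<omega> = u}) = 1"
  using sum_joint_prob[where T = "{}" and n = n and i = 0] by (simp add: joint_prob_def prob_space)

lemma measure_W_eq:
  assumes "w \<in> residue_vectors (primes_between (2 ^ Suc j))"
  shows "measure M {\<omega>\<in>space M. \<forall>p\<in>primes_between (2 ^ Suc j). W (2 ^ Suc j) \<omega> p = w p}
    = 1 / real (card (residue_vectors (primes_between (2 ^ Suc j))))"
  using W_distr[of "Suc j" w] measure_new_residues_eq[OF assms] by simp

lemma AE_W_in_residue_vectors:
  "AE \<omega> in M. restrict (W (2 ^ Suc j) \<omega>) (primes_between (2 ^ Suc j)) \<in> residue_vectors (primes_between (2 ^ Suc j))"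
proof -
  let ?T = "primes_between (2 ^ Suc j)"
  have W_fiber: "{\<omega>\<in>space M. restrict (W (2 ^ Suc j) \<omega>) ?T = w}
      = {\<omega>\<in>space M. \<forall>p\<in>?T. W (2 ^ Suc j) \<omega> p = w p}" if "w \<in> residue_vectors ?T" for w
    using restrict_eq_residue_vector_iff[OF that] by auto
  have "measure M {\<omega>\<in>space M. restrict (W (2 ^ Suc j) \<omega>) ?T \<in> residue_vectors ?T \<and> True}
      = (\<Sum>w\<in>residue_vectors ?T. measure M {\<omega>\<in>space M. restrict (W (2 ^ Suc j) \<omega>) ?T = w \<and> True})"
  proof (rule measure_sum_fibers)
    fix w assume "w \<in> residue_vectors ?T"
    have "{\<omega>\<in>space M. restrict (W (2 ^ Suc j) \<omega>) ?T = w} \<in> sets M"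
      using pred_W_eq[where T = ?T and k = "Suc j" and c = w] W_fiber[OF \<open>w \<in> residue_vectors ?T\<close>]
      by (simp add: pred_def)
    thus "{\<omega>\<in>space M. restrict (W (2 ^ Suc j) \<omega>) ?T = w \<and> True} \<in> sets M" by simp
  qed simp
  also have "\<dots> = (\<Sum>w\<in>residue_vectors ?T. 1 / real (card (residue_vectors ?T)))"
    by (intro sum.cong refl) (simp only: simp_thms W_fiber measure_W_eq)
  also have "\<dots> = 1"
    using card_residue_vectors_pos[OF finite_primes_between primes_between_subset_prime, of "2 ^ Suc j"]
    by (simp add: card_gt_0_iff)
  finally have "AE \<omega> in M. \<omega> \<in> {\<omega>\<in>space M. restrict (W (2 ^ Suc j) \<omega>) ?T \<in> residue_vectors ?T}"
    by (intro AE_prob_1) simp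
  thus ?thesis by (rule AE_mp) (auto intro!: AE_I2)
qed

lemma integral_window_W:
  fixes h :: "'a list \<Rightarrow> (nat \<Rightarrow> nat) \<Rightarrow> real" and j :: nat
  defines "T \<equiv> primes_between (2 ^ Suc j)" and "n \<equiv> C * 2 ^ Suc j"
  shows "integrable M (\<lambda>\<omega>. h (window x 0 n \<omega>) (restrict (W (2 ^ Suc j) \<omega>) T))"
    and "integral\<^sup>L M (\<lambda>\<omega>. h (window x 0 n \<omega>) (restrict (W (2 ^ Suc j) \<omega>) T))
      = (\<Sum>u\<in>words A n. \<Sum>w\<in>residue_vectors T.
          h u w * measure M {\<omega>\<in>space M. window x 0 n \<omega> = u} / real (card (residue_vectors T)))"
proof -
  define V where "V \<omega> = (window x 0 n \<omega>, restrict (W (2 ^ Suc j) \<omega>) T)" for \<omega>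
  define K where "K = words A n \<times> residue_vectors T"
  define K' where "K' = words A n \<times> PiE T (\<lambda>_. UNIV :: nat set)"
  have K: "finite K" using A by (simp add: K_def T_def)
  have countable: "countable K'" unfolding K'_def T_def using A
    by (intro countable_SIGMA countable_PiE countable_finite[OF finite_words]) (auto intro: countableI_type)
  have range: "V \<omega> \<in> K'" if "\<omega> \<in> space M" for \<omega>
    using window_in_words[OF that] by (auto simp: V_def K'_def)
  have fiber: "{\<omega>\<in>space M. V \<omega> = z}
      = {\<omega>\<in>space M. window x 0 n \<omega> = fst z \<and> (\<forall>p\<in>T. W (2 ^ Suc j) \<omega> p = snd z p)}" if "z \<in> K'" for z
    using that by (auto simp: V_def K'_def PiE_def extensional_def fun_eq_iff)
  have fiber_sets: "{\<omega>\<in>space M. V \<omega> = z} \<in> sets M" if "z \<in> K'" for z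
  proof -
    have "Measurable.pred M (\<lambda>\<omega>. window x 0 n \<omega> = fst z \<and> (\<forall>p\<in>T. W (2 ^ Suc j) \<omega> p = snd z p))"
      unfolding T_def by measurable
    thus ?thesis unfolding fiber[OF that] pred_def .
  qed
  have V: "V \<in> M \<rightarrow>\<^sub>M count_space UNIV"
    using countable range fiber_sets by (rule measurable_countable_fibers)
  have "AE \<omega> in M. V \<omega> \<in> K"
    using AE_W_in_residue_vectors[of j] by (rule AE_mp) (auto intro!: AE_I2 simp: V_def K_def T_def window_in_words)
  note int = integral_finite_valued[OF V K this, of "\<lambda>(u, w). h u w"]
  from int(1) show "integrable M (\<lambda>\<omega>. h (window x 0 n \<omega>) (restrict (W (2 ^ Suc j) \<omega>) T))"
    by (simp add: V_def)
  have "measure M {\<omega>\<in>space M. V \<omega> = (u, w)}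
      = measure M {\<omega>\<in>space M. window x 0 n \<omega> = u} / real (card (residue_vectors T))"
    if "u \<in> words A n" "w \<in> residue_vectors T" for u w
  proof -
    have "(u, w) \<in> K'" using that by (auto simp: K'_def residue_vectors_def)
    hence "measure M {\<omega>\<in>space M. V \<omega> = (u, w)}
        = measure M {\<omega>\<in>space M. window x 0 n \<omega> \<in> {u} \<and> (\<forall>p\<in>T. W (2 ^ Suc j) \<omega> p = w p)}"
      by (simp add: fiber)
    also have "\<dots> = measure M {\<omega>\<in>space M. window x 0 n \<omega> = u} / real (card (residue_vectors T))"
      using W_indep[of "Suc j" "{u}" w] measure_W_eq[of w j] that(2) by (simp add: n_def T_def)
    finally show ?thesis .
  qed
  with int(2) show "integral\<^sup>L M (\<lambda>\<omega>. h (window x 0 n \<omega>) (restrict (W (2 ^ Suc j) \<omega>) T))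
      = (\<Sum>u\<in>words A n. \<Sum>w\<in>residue_vectors T.
          h u w * measure M {\<omega>\<in>space M. window x 0 n \<omega> = u} / real (card (residue_vectors T)))"
    by (simp add: V_def K_def sum.cartesian_product')
qed

lemma integral_dist_fP_mean_y_le:
  assumes e: "0 \<le> e"
  shows "integrable M (\<lambda>\<omega>. cmod (fP f (2^k) (window x 0 (C * 2^k) \<omega>) (\<lambda>p. y p \<omega>) - fP_mean k (window x 0 (C * 2^k) \<omega>)))"
    and "integral\<^sup>L M (\<lambda>\<omega>. cmod (fP f (2^k) (window x 0 (C * 2^k) \<omega>) (\<lambda>p. y p \<omega>) - fP_mean k (window x 0 (C * 2^k) \<omega>)))
    \<le> e + 2 * (\<Sum>b\<in>residue_vectors (primes_upto (2^k)). \<Sum>u\<in>words A (C * 2^k).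
        if deviates e k u (restrict b (primes_between (2^k))) then joint_prob 0 (C * 2^k) (primes_upto (2^k)) b u else 0)"
proof -
  let ?n = "C * 2^k" and ?T = "primes_upto (2^k)" and ?T2 = "primes_between (2^k)"
  define h where "h u b = cmod (fP f (2^k) u (restrict b ?T2) - fP_mean k u)" for u b
  have T2_sub: "?T2 \<subseteq> ?T" by (auto simp: primes_upto_def primes_between_def)
  have "fP f (2^k) (window x 0 ?n \<omega>) (\<lambda>p. y p \<omega>)
      = fP f (2^k) (window x 0 ?n \<omega>) (restrict (restrict (\<lambda>p. y p \<omega>) ?T) ?T2)" for \<omega>
    using T2_sub by (intro fP_cong) auto
  hence eq: "(\<lambda>\<omega>. cmod (fP f (2^k) (window x 0 ?n \<omega>) (\<lambda>p. y p \<omega>) - fP_mean k (window x 0 ?n \<omega>)))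
      = (\<lambda>\<omega>. h (window x 0 ?n \<omega>) (restrict (\<lambda>p. y p \<omega>) ?T))"
    by (simp add: h_def)
  show "integrable M (\<lambda>\<omega>. cmod (fP f (2^k) (window x 0 ?n \<omega>) (\<lambda>p. y p \<omega>) - fP_mean k (window x 0 ?n \<omega>)))"
    unfolding eq by (rule integral_window_residues(1))
  have "integral\<^sup>L M (\<lambda>\<omega>. cmod (fP f (2^k) (window x 0 ?n \<omega>) (\<lambda>p. y p \<omega>) - fP_mean k (window x 0 ?n \<omega>)))
      = (\<Sum>b\<in>residue_vectors ?T. \<Sum>u\<in>words A ?n. h u b * joint_prob 0 ?n ?T b u)"
    unfolding eq by (rule integral_window_residues(2))
  also have "\<dots> \<le> (\<Sum>b\<in>residue_vectors ?T. \<Sum>u\<in>words A ?n. e * joint_prob 0 ?n ?T b u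
      + 2 * (if deviates e k u (restrict b ?T2) then joint_prob 0 ?n ?T b u else 0))"
  proof (intro sum_mono)
    fix b u assume b: "b \<in> residue_vectors ?T" and u: "u \<in> words A ?n"
    have "restrict b ?T2 p < p" if "p \<in> ?T2" for p using b that T2_sub by (auto simp: residue_vectors_def)
    hence "h u b \<le> e + (if deviates e k u (restrict b ?T2) then 2 else 0)"
      unfolding h_def using norm_fP_sub_fP_mean_le[OF u _ e] by blast
    from mult_right_mono[OF this joint_prob_nonneg[of 0 ?n ?T b u]]
    show "h u b * joint_prob 0 ?n ?T b u \<le> e * joint_prob 0 ?n ?T b u
      + 2 * (if deviates e k u (restrict b ?T2) then joint_prob 0 ?n ?T b u else 0)"
      by (simp add: algebra_simps split: if_splits)
  qed
  also have "\<dots> = e + 2 * (\<Sum>b\<in>residue_vectors ?T. \<Sum>u\<in>words A ?n.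
      if deviates e k u (restrict b ?T2) then joint_prob 0 ?n ?T b u else 0)"
    using sum_sum_joint_prob[where Q = "2^k" and n = ?n and i = 0]
    by (simp add: sum.distrib sum_distrib_left[symmetric])
  finally show "integral\<^sup>L M (\<lambda>\<omega>. cmod (fP f (2^k) (window x 0 ?n \<omega>) (\<lambda>p. y p \<omega>) - fP_mean k (window x 0 ?n \<omega>)))
    \<le> e + 2 * (\<Sum>b\<in>residue_vectors ?T. \<Sum>u\<in>words A ?n.
        if deviates e k u (restrict b ?T2) then joint_prob 0 ?n ?T b u else 0)" .
qed

lemma integral_dist_fP_mean_W_le:
  assumes e: "0 \<le> e"
    and rare: "\<And>u. u \<in> words A (C * 2 ^ Suc j) \<Longrightarrow>
      real (card {w\<in>residue_vectors (primes_between (2 ^ Suc j)). deviates e (Suc j) u w})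
        \<le> \<rho> * real (card (residue_vectors (primes_between (2 ^ Suc j))))"
  shows "integrable M (\<lambda>\<omega>. cmod (fP_mean (Suc j) (window x 0 (C * 2 ^ Suc j) \<omega>)
      - fP f (2 ^ Suc j) (window x 0 (C * 2 ^ Suc j) \<omega>) (W (2 ^ Suc j) \<omega>)))"
    and "integral\<^sup>L M (\<lambda>\<omega>. cmod (fP_mean (Suc j) (window x 0 (C * 2 ^ Suc j) \<omega>)
      - fP f (2 ^ Suc j) (window x 0 (C * 2 ^ Suc j) \<omega>) (W (2 ^ Suc j) \<omega>))) \<le> e + 2 * \<rho>"
proof -
  let ?n = "C * 2 ^ Suc j" and ?T2 = "primes_between (2 ^ Suc j)"
  define N where "N = real (card (residue_vectors ?T2))"
  have N: "0 < N"
    using card_residue_vectors_pos[OF finite_primes_between primes_between_subset_prime] by (simp add: N_def)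
  define h where "h u w = cmod (fP f (2 ^ Suc j) u w - fP_mean (Suc j) u)" for u w
  have "fP f (2 ^ Suc j) (window x 0 ?n \<omega>) (W (2 ^ Suc j) \<omega>)
      = fP f (2 ^ Suc j) (window x 0 ?n \<omega>) (restrict (W (2 ^ Suc j) \<omega>) ?T2)" for \<omega>
    by (intro fP_cong) auto
  hence eq: "(\<lambda>\<omega>. cmod (fP_mean (Suc j) (window x 0 ?n \<omega>) - fP f (2 ^ Suc j) (window x 0 ?n \<omega>) (W (2 ^ Suc j) \<omega>)))
      = (\<lambda>\<omega>. h (window x 0 ?n \<omega>) (restrict (W (2 ^ Suc j) \<omega>) ?T2))"
    by (simp add: h_def norm_minus_commute)
  show "integrable M (\<lambda>\<omega>. cmod (fP_mean (Suc j) (window x 0 ?n \<omega>) - fP f (2 ^ Suc j) (window x 0 ?n \<omega>) (W (2 ^ Suc j) \<omega>)))"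
    unfolding eq by (rule integral_window_W(1))
  have "integral\<^sup>L M (\<lambda>\<omega>. cmod (fP_mean (Suc j) (window x 0 ?n \<omega>) - fP f (2 ^ Suc j) (window x 0 ?n \<omega>) (W (2 ^ Suc j) \<omega>)))
      = (\<Sum>u\<in>words A ?n. \<Sum>w\<in>residue_vectors ?T2. h u w * measure M {\<omega>\<in>space M. window x 0 ?n \<omega> = u} / N)"
    unfolding eq N_def by (rule integral_window_W(2))
  also have "\<dots> = (\<Sum>u\<in>words A ?n. (\<Sum>w\<in>residue_vectors ?T2. h u w) * measure M {\<omega>\<in>space M. window x 0 ?n \<omega> = u} / N)"
    by (simp add: sum_distrib_right sum_divide_distrib)
  also have "\<dots> \<le> (\<Sum>u\<in>words A ?n. ((e + 2 * \<rho>) * N) * measure M {\<omega>\<in>space M. window x 0 ?n \<omega> = u} / N)"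
  proof (intro sum_mono divide_right_mono mult_right_mono)
    fix u assume u: "u \<in> words A ?n"
    have "(\<Sum>w\<in>residue_vectors ?T2. h u w) \<le> (\<Sum>w\<in>residue_vectors ?T2. e + (if deviates e (Suc j) u w then 2 else 0))"
      unfolding h_def using u e by (intro sum_mono norm_fP_sub_fP_mean_le) (auto simp: residue_vectors_def)
    also have "\<dots> = e * N + 2 * real (card {w\<in>residue_vectors ?T2. deviates e (Suc j) u w})"
      by (simp add: N_def sum.distrib sum.If_cases Int_def)
    also have "\<dots> \<le> (e + 2 * \<rho>) * N" using rare[OF u] by (simp add: N_def algebra_simps)
    finally show "(\<Sum>w\<in>residue_vectors ?T2. h u w) \<le> (e + 2 * \<rho>) * N" .
  qed (use N in auto)
  also have "\<dots> = (\<Sum>u\<in>words A ?n. measure M {\<omega>\<in>space M. window x 0 ?n \<omega> = u} * (e + 2 * \<rho>))"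
    using N by (intro sum.cong refl) simp
  also have "\<dots> = e + 2 * \<rho>" using sum_measure_window_eq_1 by (simp add: sum_distrib_right[symmetric])
  finally show "integral\<^sup>L M (\<lambda>\<omega>. cmod (fP_mean (Suc j) (window x 0 ?n \<omega>)
      - fP f (2 ^ Suc j) (window x 0 ?n \<omega>) (W (2 ^ Suc j) \<omega>))) \<le> e + 2 * \<rho>" .
qed

lemma integral_dist_fP_le:
  fixes j :: nat and e :: real
  defines "N \<equiv> real (card (primes_between (2 ^ Suc j)))"
  assumes e: "0 < e" "e \<le> 1" and L: "0 < N * e\<^sup>2 / 64 - ln 4"
  shows "integral\<^sup>L M (\<lambda>\<omega>. cmod (fP f (2 ^ Suc j) (window x 0 (C * 2 ^ Suc j) \<omega>) (\<lambda>p. y p \<omega>)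
      - fP f (2 ^ Suc j) (window x 0 (C * 2 ^ Suc j) \<omega>) (W (2 ^ Suc j) \<omega>)))
    \<le> 2 * e + 2 * (entropy_drop (C * 2 ^ Suc j) j + 1) / (N * e\<^sup>2 / 64 - ln 4) + 8 * exp (- N * e\<^sup>2 / 64)"
proof -
  let ?n = "C * 2 ^ Suc j" and ?X = "window x 0 (C * 2 ^ Suc j)"
  define \<rho> where "\<rho> = 4 * exp (- N * e\<^sup>2 / 64)"
  have \<rho>: "0 < \<rho>" and ln_\<rho>: "ln (1 / \<rho>) = N * e\<^sup>2 / 64 - ln 4"
    by (simp_all add: \<rho>_def ln_div ln_mult)
  have rare: "real (card {w\<in>residue_vectors (primes_between (2 ^ Suc j)). deviates e (Suc j) u w})
      \<le> \<rho> * real (card (residue_vectors (primes_between (2 ^ Suc j))))" if "u \<in> words A ?n" for u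
    using card_deviates_le[OF that e] by (simp add: \<rho>_def N_def)
  note Y = integral_dist_fP_mean_y_le[OF less_imp_le[OF e(1)], where k = "Suc j"]
    and W = integral_dist_fP_mean_W_le[OF less_imp_le[OF e(1)] rare]
  have "(\<Sum>b\<in>residue_vectors (primes_upto (2 ^ Suc j)). \<Sum>u\<in>words A ?n.
      if deviates e (Suc j) u (restrict b (primes_between (2 ^ Suc j))) then joint_prob 0 ?n (primes_upto (2 ^ Suc j)) b u else 0)
      \<le> (entropy_drop ?n j + 1) / (N * e\<^sup>2 / 64 - ln 4)"
    using deviation_prob_le_entropy_drop[where E = "deviates e (Suc j)" and n = ?n, OF rare \<rho>] L
    by (simp add: ln_\<rho> pos_le_divide_eq)
  hence Y_le: "integral\<^sup>L M (\<lambda>\<omega>. cmod (fP f (2 ^ Suc j) (?X \<omega>) (\<lambda>p. y p \<omega>) - fP_mean (Suc j) (?X \<omega>)))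
      \<le> e + 2 * ((entropy_drop ?n j + 1) / (N * e\<^sup>2 / 64 - ln 4))"
    using Y(2) e by linarith
  have "integral\<^sup>L M (\<lambda>\<omega>. cmod (fP f (2 ^ Suc j) (?X \<omega>) (\<lambda>p. y p \<omega>) - fP f (2 ^ Suc j) (?X \<omega>) (W (2 ^ Suc j) \<omega>)))
      \<le> integral\<^sup>L M (\<lambda>\<omega>. cmod (fP f (2 ^ Suc j) (?X \<omega>) (\<lambda>p. y p \<omega>) - fP_mean (Suc j) (?X \<omega>))
        + cmod (fP_mean (Suc j) (?X \<omega>) - fP f (2 ^ Suc j) (?X \<omega>) (W (2 ^ Suc j) \<omega>)))"
    using Y(1) W(1) norm_diff_triangle_le[OF order.refl order.refl]
    by (intro integral_mono' Bochner_Integration.integrable_add) auto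
  also have "\<dots> = integral\<^sup>L M (\<lambda>\<omega>. cmod (fP f (2 ^ Suc j) (?X \<omega>) (\<lambda>p. y p \<omega>) - fP_mean (Suc j) (?X \<omega>)))
      + integral\<^sup>L M (\<lambda>\<omega>. cmod (fP_mean (Suc j) (?X \<omega>) - fP f (2 ^ Suc j) (?X \<omega>) (W (2 ^ Suc j) \<omega>)))"
    using Y(1) W(1) e by (intro Bochner_Integration.integral_add) auto
  finally show ?thesis using Y_le W(2) e by (simp add: \<rho>_def)
qed

section \<open>Choice of the scale\<close>

lemma sum_entropy_drop_le:
  "(\<Sum>j<J. entropy_drop (C * 2 ^ Suc j) j / 2 ^ Suc j) \<le> cond_entropy 0 (C * 2) (primes_upto 1) / 2"
proof -
  define a where "a j = cond_entropy 0 (C * 2 ^ Suc j) (primes_upto (2 ^ j)) / 2 ^ Suc j" for j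
  have step: "a (Suc j) \<le> a j - entropy_drop (C * 2 ^ Suc j) j / 2 ^ Suc j" for j
  proof -
    have "cond_entropy 0 (C * 2 ^ Suc (Suc j)) (primes_upto (2 ^ Suc j))
        \<le> 2 * cond_entropy 0 (C * 2 ^ Suc j) (primes_upto (2 ^ Suc j))"
      using cond_entropy_double_le[of "C * 2 ^ Suc j"] by (simp add: mult_ac)
    thus ?thesis by (simp add: a_def entropy_drop_def field_simps)
  qed
  have "a J + (\<Sum>j<J. entropy_drop (C * 2 ^ Suc j) j / 2 ^ Suc j) \<le> a 0"
  proof (induction J)
    case (Suc J)
    thus ?case using step[of J] by simp
  qed simp
  moreover have "0 \<le> a J" unfolding a_def using cond_entropy_nonneg by simp
  ultimately show ?thesis by (simp add: a_def)
qed

theorem liminf_integral_dist_fP_eq_0: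
  "liminf (\<lambda>k::nat. ereal (integral\<^sup>L M (\<lambda>\<omega>.
      cmod (fP f (2^k) (window x 0 (C * 2^k) \<omega>) (\<lambda>p. y p \<omega>)
            - fP f (2^k) (window x 0 (C * 2^k) \<omega>) (W (2^k) \<omega>))))) = 0"
proof (rule liminf_eq_0_if_frequently_small)
  fix d :: real and K0 :: nat assume "0 < d"
  define d' where "d' = min d 1"
  define e where "e = d' / 8"
  define N where "N j = real (card (primes_between (2 ^ Suc j)))" for j
  have d': "0 < d'" "d' \<le> 1" "d' \<le> d" using \<open>0 < d\<close> by (auto simp: d'_def)
  hence e: "0 < e" "e \<le> 1" by (auto simp: e_def)
  have "0 < e\<^sup>2 * d' / 2048" using d' e by simp
  hence "\<exists>j\<ge>K0. entropy_drop (C * 2 ^ Suc j) j \<le> e\<^sup>2 * d' / 2048 * N j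
      \<and> max (384 / e\<^sup>2) (2048 / (e\<^sup>2 * d')) \<le> N j"
    unfolding N_def by (rule frequently_small_ratio[OF entropy_drop_nonneg of_nat_0_le_iff
        sum_entropy_drop_le dyadic_prime_density_unbounded])
  then obtain j where j: "K0 \<le> j" "entropy_drop (C * 2 ^ Suc j) j \<le> e\<^sup>2 * d' / 2048 * N j"
      "max (384 / e\<^sup>2) (2048 / (e\<^sup>2 * d')) \<le> N j"
    by blast
  have "384 / e\<^sup>2 \<le> N j" "2048 / (e\<^sup>2 * d') \<le> N j" using j(3) by auto
  note small = deviation_bound_lt[OF d'(1,2) e_def j(2) this]
  have "integral\<^sup>L M (\<lambda>\<omega>. cmod (fP f (2 ^ Suc j) (window x 0 (C * 2 ^ Suc j) \<omega>) (\<lambda>p. y p \<omega>)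
      - fP f (2 ^ Suc j) (window x 0 (C * 2 ^ Suc j) \<omega>) (W (2 ^ Suc j) \<omega>)))
    \<le> 2 * e + 2 * (entropy_drop (C * 2 ^ Suc j) j + 1) / (N j * e\<^sup>2 / 64 - ln 4) + 8 * exp (- N j * e\<^sup>2 / 64)"
    using integral_dist_fP_le[OF e small(1)[unfolded N_def]] by (simp add: N_def)
  also have "\<dots> < d'" by (rule small(2))
  finally show "\<exists>k\<ge>K0. integral\<^sup>L M (\<lambda>\<omega>. cmod (fP f (2^k) (window x 0 (C * 2^k) \<omega>) (\<lambda>p. y p \<omega>)
      - fP f (2^k) (window x 0 (C * 2^k) \<omega>) (W (2^k) \<omega>))) < d"
    using j(1) d'(3) by (intro exI[of _ "Suc j"]) auto
qed simp

end

theorem theorem2p14: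
  fixes M :: "'w measure"
    and A :: "'a set" and C :: nat
    and x :: "nat \<Rightarrow> 'w \<Rightarrow> 'a"
    and y :: "nat \<Rightarrow> 'w \<Rightarrow> nat"
    and f :: "nat \<Rightarrow> nat \<Rightarrow> 'a list \<Rightarrow> nat \<Rightarrow> complex"
    and W :: "nat \<Rightarrow> 'w \<Rightarrow> nat \<Rightarrow> nat"
  assumes M: "prob_space M"
    and A: "finite A"
    and x_meas: "\<And>i. x i \<in> M \<rightarrow>\<^sub>M count_space UNIV"
    and x_range: "\<And>i \<omega>. i \<ge> 1 \<Longrightarrow> \<omega> \<in> space M \<Longrightarrow> x i \<omega> \<in> A"
    and y_meas: "\<And>p. y p \<in> M \<rightarrow>\<^sub>M count_space UNIV"
    and y_range: "\<And>p \<omega>. prime p \<Longrightarrow> \<omega> \<in> space M \<Longrightarrow> y p \<omega> < p"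
    and uniform: "\<And>P b. (\<forall>p\<in>primes_upto P. b p < p) \<Longrightarrow>
        measure M {\<omega>\<in>space M. \<forall>p\<in>primes_upto P. y p \<omega> = b p}
          = 1 / real (\<Prod>p\<in>primes_upto P. p)"
    and stationary: "\<And>i m (S :: 'a list set).
        measure M {\<omega>\<in>space M. window x 0 m \<omega> \<in> S}
          = measure M {\<omega>\<in>space M. window x i m \<omega> \<in> S}"
    and cond_stationary: "\<And>P b i m (S :: 'a list set). (\<forall>p\<in>primes_upto P. b p < p) \<Longrightarrow>
        cprob M (\<lambda>\<omega>. window x 0 m \<omega> \<in> S) (\<lambda>\<omega>. \<forall>p\<in>primes_upto P. y p \<omega> = b p)
          = cprob M (\<lambda>\<omega>. window x i m \<omega> \<in> S)
              (\<lambda>\<omega>. \<forall>p\<in>primes_upto P. y p \<omega> = (b p + i) mod p)"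
    and f_bound: "\<And>k p X r. p \<in> primes_between (2^k) \<Longrightarrow> length X = C * 2^k \<Longrightarrow>
        set X \<subseteq> A \<Longrightarrow> r < p \<Longrightarrow> cmod (f (2^k) p X r) \<le> 1"
    and W_meas: "\<And>k p. (\<lambda>\<omega>. W (2^k) \<omega> p) \<in> M \<rightarrow>\<^sub>M count_space UNIV"
    and W_distr: "\<And>k b.
        measure M {\<omega>\<in>space M. \<forall>p\<in>primes_between (2^k). W (2^k) \<omega> p = b p}
          = measure M {\<omega>\<in>space M. \<forall>p\<in>primes_between (2^k). y p \<omega> = b p}"
    and W_indep: "\<And>k b (S :: 'a list set).
        measure M {\<omega>\<in>space M. window x 0 (C * 2^k) \<omega> \<in> S
                      \<and> (\<forall>p\<in>primes_between (2^k). W (2^k) \<omega> p = b p)}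
          = measure M {\<omega>\<in>space M. window x 0 (C * 2^k) \<omega> \<in> S}
            * measure M {\<omega>\<in>space M. \<forall>p\<in>primes_between (2^k). W (2^k) \<omega> p = b p}"
  shows "liminf (\<lambda>k::nat. ereal (integral\<^sup>L M (\<lambda>\<omega>.
            cmod (fP f (2^k) (window x 0 (C * 2^k) \<omega>) (\<lambda>p. y p \<omega>)
                  - fP f (2^k) (window x 0 (C * 2^k) \<omega>) (W (2^k) \<omega>))))) = 0"
proof -
  interpret residue_process M A C x y f W
    using M A x_meas x_range y_meas y_range uniform cond_stationary f_bound W_meas W_distr W_indep
    by (intro residue_process.intro residue_process_axioms.intro)
  show ?thesis by (rule liminf_integral_dist_fP_eq_0)
qed

end
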